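(* Let $H$ be a Hilbert space with inner product $\langle\cdot,\cdot\rangle$ and norm $\|\cdot\|$, let $A$ be a positive definite, selfadjoint linear operator on $H$ with $D(A)$ dense in $H$, and write $|v|_1=\langle Av,v\rangle^{1/2}$ for $v\in V=D(A^{1/2})$. Let $\beta\in(0,1)$, $T>0$, $u^0\in H$, and let $f:\mathbb{R}_{\geq0}\to H$ be such that $e^{-\sigma t}\|f(t)\|$ is bounded for $t\ge 0$ for some $\sigma>0$. Let $u$ be the solution of \[ D_t^\beta u(t)+Au(t)=f(t),\quad 0<t<T,\qquad u(0)=u^0. \] Then \[ \frac12\int_0^T g_{\beta,T}(t)\|u(t)\|^2\,dt+\int_0^T|u(t)|_1^2\,dt\leq \int_0^T\langle f(t),u(t)\rangle\,dt+\frac{1}{\Gamma(1-\beta)}\int_0^T t^{-\beta}\langle u^0,u(t)\rangle\,dt, \] where $g_{\beta,T}(t)=\frac{1}{\Gamma(1-\beta)}\left((T-t)^{-\beta}+t^{-\beta}\right)$.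
   Context: $D_t^\beta$ is the Caputo fractional derivative of order $\beta$: $D_t^\beta g(t)=\frac{1}{\Gamma(1-\beta)}\int_0^t (t-\tau)^{-\beta} g'(\tau)\,d\tau$. The equation is understood as an equality in $H$. *)

theory Defs
  imports "HOL-Analysis.Analysis"
begin

text \<open>Real Hilbert space: type class real_inner plus completeness.
  An (unbounded) linear operator is given by a function A together with its domain DA.\<close>

definition dense_linear_operator :: "('a::real_inner \<Rightarrow> 'a) \<Rightarrow> 'a set \<Rightarrow> bool" where
  "dense_linear_operator A DA \<longleftrightarrow>
     subspace DA \<and> closure DA = UNIV \<and>
     (\<forall>x\<in>DA. \<forall>y\<in>DA. A (x + y) = A x + A y) \<and>
     (\<forall>c. \<forall>x\<in>DA. A (c *\<^sub>R x) = c *\<^sub>R A x)"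

text \<open>Selfadjoint: A equals its adjoint A*, i.e. A is symmetric on DA and every y in the
  domain of A* (there is z with <Ax,y> = <x,z> for all x in DA) lies in DA with A y = z.\<close>
definition selfadjoint_op :: "('a::real_inner \<Rightarrow> 'a) \<Rightarrow> 'a set \<Rightarrow> bool" where
  "selfadjoint_op A DA \<longleftrightarrow>
     (\<forall>x\<in>DA. \<forall>y\<in>DA. inner (A x) y = inner x (A y)) \<and>
     (\<forall>y z. (\<forall>x\<in>DA. inner (A x) y = inner x z) \<longrightarrow> y \<in> DA \<and> A y = z)"

definition positive_definite_op :: "('a::real_inner \<Rightarrow> 'a) \<Rightarrow> 'a set \<Rightarrow> bool" where
  "positive_definite_op A DA \<longleftrightarrow> (\<forall>v\<in>DA. v \<noteq> 0 \<longrightarrow> inner (A v) v > 0)"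

definition caputo_deriv :: "real \<Rightarrow> (real \<Rightarrow> 'a::real_normed_vector) \<Rightarrow> real \<Rightarrow> 'a" where
  "caputo_deriv \<beta> u t = (1 / Gamma (1 - \<beta>)) *\<^sub>R
      integral {0..t} (\<lambda>\<tau>. (t - \<tau>) powr (- \<beta>) *\<^sub>R vector_derivative u (at \<tau>))"

definition is_solution ::
  "real \<Rightarrow> ('a::real_inner \<Rightarrow> 'a) \<Rightarrow> 'a set \<Rightarrow> (real \<Rightarrow> 'a) \<Rightarrow> 'a \<Rightarrow> real \<Rightarrow> (real \<Rightarrow> 'a) \<Rightarrow> bool" where
  "is_solution \<beta> A DA f u0 T u \<longleftrightarrow>
     continuous_on {0..T} u \<and> u 0 = u0 \<and>
     (\<forall>t\<in>{0<..<T}.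
        u differentiable (at t) \<and>
        (\<lambda>\<tau>. (t - \<tau>) powr (- \<beta>) *\<^sub>R vector_derivative u (at \<tau>)) integrable_on {0..t} \<and>
        u t \<in> DA \<and>
        caputo_deriv \<beta> u t + A (u t) = f t)"

definition g_weight :: "real \<Rightarrow> real \<Rightarrow> real \<Rightarrow> real" where
  "g_weight \<beta> T t = (1 / Gamma (1 - \<beta>)) * ((T - t) powr (- \<beta>) + t powr (- \<beta>))"

end

theory Submission
  imports Defs
begin

text \<open>
  Write \<open>\<phi> = \<parallel>u\<parallel>\<^sup>2\<close> and \<open>J t = \<integral>\<^sub>0\<^sup>t (t - \<tau>)\<^sup>-\<^sup>\<beta> \<phi> \<tau> d\<tau>\<close>. Integrating by parts against the kernel, the
  Caputo integral paired with \<open>u t\<close> equals \<open>t\<^sup>-\<^sup>\<beta> \<langle>u t - u\<^sup>0, u t\<rangle>\<close> plus the Marchaud integral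
  \<open>\<integral>\<^sub>0\<^sup>t \<beta> (t - \<tau>)\<^sup>-\<^sup>\<beta>\<^sup>-\<^sup>1 \<langle>u t - u \<tau>, u t\<rangle> d\<tau>\<close>. Since \<open>\<langle>u t - u \<tau>, u t\<rangle> \<ge> (\<phi> t - \<phi> \<tau>) / 2\<close>, this is at
  least \<open>t\<^sup>-\<^sup>\<beta> (\<phi> t / 2 - \<langle>u\<^sup>0, u t\<rangle>) + J' t / 2\<close>, because
  \<open>J' t = t\<^sup>-\<^sup>\<beta> \<phi> t + \<integral>\<^sub>0\<^sup>t \<beta> (t - \<tau>)\<^sup>-\<^sup>\<beta>\<^sup>-\<^sup>1 (\<phi> t - \<phi> \<tau>) d\<tau>\<close>. Over \<open>[0, T]\<close>, \<open>J'\<close> integrates to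
  \<open>J T = \<integral>\<^sub>0\<^sup>T (T - t)\<^sup>-\<^sup>\<beta> \<phi> t dt\<close>, which together with \<open>\<integral> t\<^sup>-\<^sup>\<beta> \<phi> t / 2\<close> produces the weight
  \<open>g\<^sub>\<beta>\<^sub>,\<^sub>T / 2\<close>; pairing the equation with \<open>u t\<close> and integrating gives the inequality.

  The sign of \<open>\<langle>A u, u\<rangle>\<close> is needed only for integrability. No measurability of \<open>f\<close> is assumed:
  \<open>\<langle>A u, u\<rangle>\<close> is measurable because \<open>A\<close> is symmetric with dense domain, the paired Caputo integral
  is a limit of difference quotients that are continuous in \<open>t\<close>, and the equation then makes
  \<open>\<langle>f, u\<rangle>\<close> measurable; finally \<open>\<langle>A u, u\<rangle>\<close> is squeezed between \<open>0\<close> and an integrable function.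
\<close>

lemma continuous_on_Ioo_imp_borel_measurable_Icc:
  fixes f :: "real \<Rightarrow> real"
  assumes "continuous_on {a<..<c} f"
  shows "f \<in> borel_measurable (lebesgue_on {a..c})"
proof -
  have "f \<in> borel_measurable (lebesgue_on {a<..<c})"
    by (rule continuous_imp_measurable_on_sets_lebesgue[OF assms]) auto
  then have "f measurable_on {a<..<c}"
    by (simp add: measurable_on_iff_borel_measurable)
  then have "f measurable_on {a..c}"
  proof (rule measurable_on_spike_set)
    show "negligible ({a<..<c} - {a..c} \<union> ({a..c} - {a<..<c}))"
      by (rule negligible_subset[of "{a, c}"]) auto
  qed
  then show ?thesis
    by (simp add: measurable_on_iff_borel_measurable)
qed

lemma integral_norm_bound_integral_off_negligible:
  fixes f :: "'a::euclidean_space \<Rightarrow> 'b::banach"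
  assumes "f integrable_on S" "g integrable_on S" "negligible N"
    and "\<And>x. x \<in> S - N \<Longrightarrow> norm (f x) \<le> g x"
  shows "norm (integral S f) \<le> integral S g"
proof -
  define f' where "f' = (\<lambda>x. if x \<in> N then 0 else f x)"
  define g' where "g' = (\<lambda>x. if x \<in> N then 0 else g x)"
  have "integral S f = integral S f'" "integral S g = integral S g'"
    unfolding f'_def g'_def by (auto intro!: integral_spike[OF assms(3)])
  moreover have "norm (integral S f') \<le> integral S g'"
  proof (rule Henstock_Kurzweil_Integration.integral_norm_bound_integral)
    show "f' integrable_on S" "g' integrable_on S"
      unfolding f'_def g'_def by (auto intro: integrable_spike[OF _ assms(3)] assms(1,2))
  qed (use assms(4) in \<open>auto simp: f'_def g'_def\<close>)
  ultimately show ?thesis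
    by simp
qed

lemma measurable_dominated_off_negligible_imp_integrable:
  fixes f g :: "'n::euclidean_space \<Rightarrow> real"
  assumes "f measurable_on S" "g integrable_on S" "negligible N" "S \<in> sets lebesgue"
    and "\<And>x. x \<in> S - N \<Longrightarrow> \<bar>f x\<bar> \<le> g x"
  shows "f integrable_on S"
proof -
  define f' where "f' = (\<lambda>x. if x \<in> N then 0 else f x)"
  define g' where "g' = (\<lambda>x. if x \<in> N then 0 else g x)"
  have "f' measurable_on S"
    by (rule measurable_on_spike[OF assms(1,3)]) (simp add: f'_def)
  moreover have "g' integrable_on S"
    by (rule integrable_spike[OF assms(2,3)]) (simp add: g'_def)
  ultimately have "f' integrable_on S"
    using assms(4,5)
    by (intro measurable_bounded_by_integrable_imp_integrable[of f' S g'])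
       (auto simp: f'_def g'_def measurable_on_iff_borel_measurable)
  then show ?thesis
    by (rule integrable_spike[OF _ assms(3)]) (simp add: f'_def)
qed

lemma integral_le_off_negligible:
  fixes f g :: "'n::euclidean_space \<Rightarrow> real"
  assumes "f integrable_on S" "g integrable_on S" "negligible N" "\<And>x. x \<in> S - N \<Longrightarrow> f x \<le> g x"
  shows "integral S f \<le> integral S g"
proof -
  define f' where "f' = (\<lambda>x. if x \<in> N then 0 else f x)"
  define g' where "g' = (\<lambda>x. if x \<in> N then 0 else g x)"
  have "integral S f = integral S f'" "integral S g = integral S g'"
    unfolding f'_def g'_def by (auto intro!: integral_spike[OF assms(3)])
  moreover have "integral S f' \<le> integral S g'"
    using assms unfolding f'_def g'_def
    by (intro integral_le) (auto intro: integrable_spike[OF _ assms(3)])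
  ultimately show ?thesis
    by simp
qed

lemma sandwiched_integrable_and_integral_le:
  fixes a F w :: "real \<Rightarrow> real"
  assumes "a measurable_on {0..T}" "F integrable_on {0..T}" "(w has_integral W) {0..T}" "0 \<le> c"
    and "\<And>t. t \<in> {0<..<T} \<Longrightarrow> 0 \<le> a t" "\<And>t. t \<in> {0<..<T} \<Longrightarrow> a t + c * w t \<le> F t"
  shows "a integrable_on {0..T}" "integral {0..T} a \<le> integral {0..T} F - c * W"
proof -
  have negl: "negligible {0, T}"
    by simp
  have Fw_int: "(\<lambda>t. F t - c * w t) integrable_on {0..T}"
    using assms(2,3) by (intro integrable_diff integrable_on_mult_right) auto
  have dominated: "a t \<le> F t - c * w t" and abs_dominated: "\<bar>a t\<bar> \<le> F t - c * w t"
    if "t \<in> {0..T} - {0, T}" for t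
    using assms(5,6)[of t] that by auto
  show a_int: "a integrable_on {0..T}"
    by (rule measurable_dominated_off_negligible_imp_integrable[OF assms(1) Fw_int negl _ abs_dominated]) simp
  have "integral {0..T} a \<le> integral {0..T} (\<lambda>t. F t - c * w t)"
    by (rule integral_le_off_negligible[OF a_int Fw_int negl dominated])
  also have "\<dots> = integral {0..T} F - c * W"
    using integral_diff[OF assms(2) integrable_on_mult_right[OF has_integral_integrable[OF assms(3)]]]
      integral_unique[OF assms(3)] by simp
  finally show "integral {0..T} a \<le> integral {0..T} F - c * W" .
qed

lemma integral_dominated_convergence_at_within:
  fixes D :: "'a::first_countable_topology \<Rightarrow> 'n::euclidean_space \<Rightarrow> real"
  assumes "\<And>h. h \<in> U - {x} \<Longrightarrow> D h integrable_on S" "G integrable_on S"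
    and "\<And>h \<tau>. h \<in> U - {x} \<Longrightarrow> \<tau> \<in> S \<Longrightarrow> norm (D h \<tau>) \<le> G \<tau>"
    and "\<And>\<tau>. \<tau> \<in> S \<Longrightarrow> ((\<lambda>h. D h \<tau>) \<longlongrightarrow> L \<tau>) (at x within U)"
  shows "((\<lambda>h. integral S (D h)) \<longlongrightarrow> integral S L) (at x within U)"
proof (subst tendsto_at_iff_sequentially, intro allI impI)
  fix X :: "nat \<Rightarrow> 'a" assume X: "\<forall>i. X i \<in> U - {x}" "X \<longlonglongrightarrow> x"
  then have X_at: "filterlim X (at x within U) sequentially"
    by (simp add: filterlim_at)
  have "(\<lambda>k. D (X k) \<tau>) \<longlonglongrightarrow> L \<tau>" if "\<tau> \<in> S" for \<tau>
    using filterlim_compose[OF assms(4)[OF that] X_at] .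
  then show "((\<lambda>h. integral S (D h)) \<circ> X) \<longlonglongrightarrow> integral S L"
    using dominated_convergence(2)[of "\<lambda>k. D (X k)" S G L] assms(1-3) X(1) by (simp add: o_def)
qed

lemma tendsto_integral_Icc_at_left:
  fixes f :: "real \<Rightarrow> real"
  assumes "f integrable_on {0..t}" "0 < t"
  shows "((\<lambda>s. integral {0..s} f) \<longlongrightarrow> integral {0..t} f) (at_left t)"
proof -
  have "continuous_on {0..t} (\<lambda>s. integral {0..s} f)"
    by (rule indefinite_integral_continuous_1[OF assms(1)])
  then have "((\<lambda>s. integral {0..s} f) \<longlongrightarrow> integral {0..t} f) (at t within {0..t})"
    using assms(2) by (simp add: continuous_on_def)
  then show ?thesis
    using at_within_Icc_at_left[OF assms(2)] by simp
qed

subsection \<open>Weakly singular kernels\<close>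

text \<open>With \<open>c = 1 / \<Gamma>(1 - b)\<close>, \<open>c * rl_integral b g\<close> is the Riemann--Liouville integral of order
  \<open>1 - b\<close>, and \<open>c * (t\<^sup>-\<^sup>b (g t - g 0) + marchaud_integral b g t)\<close> is Marchaud's form of the Caputo
  derivative \<open>D\<^sub>t\<^sup>b g t\<close>.\<close>

definition rl_integral :: "real \<Rightarrow> (real \<Rightarrow> real) \<Rightarrow> real \<Rightarrow> real" where
  "rl_integral b g x = integral {0..x} (\<lambda>\<tau>. (x - \<tau>) powr (-b) * g \<tau>)"

definition marchaud_integral :: "real \<Rightarrow> (real \<Rightarrow> real) \<Rightarrow> real \<Rightarrow> real" where
  "marchaud_integral b g t = integral {0..t} (\<lambda>\<tau>. b * (t - \<tau>) powr (-b - 1) * (g t - g \<tau>))"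

lemma has_real_derivative_powr_diff:
  fixes x y e :: real
  assumes "y < x"
  shows "((\<lambda>\<tau>. (x - \<tau>) powr e) has_real_derivative - (e * (x - y) powr (e - 1))) (at y)"
  using DERIV_chain2[OF has_real_derivative_powr[of "x - y" e] DERIV_diff[OF DERIV_const DERIV_ident]] assms
  by simp

lemma has_integral_singular_kernel:
  fixes a s x b :: real
  assumes "b < 1" "a \<le> s" "s \<le> x"
  shows "((\<lambda>\<tau>. (x - \<tau>) powr (-b)) has_integral
           ((x - a) powr (1 - b) - (x - s) powr (1 - b)) / (1 - b)) {a..s}"
proof -
  define F where "F = (\<lambda>\<tau>::real. - ((x - \<tau>) powr (1 - b)) / (1 - b))"
  have "((\<lambda>\<tau>. (x - \<tau>) powr (-b)) has_integral F s - F a) {a..s}"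
  proof (rule fundamental_theorem_of_calculus_interior[OF \<open>a \<le> s\<close>])
    show "continuous_on {a..s} F"
      unfolding F_def using assms by (intro continuous_intros continuous_on_powr') auto
    fix y assume "y \<in> {a<..<s}"
    then have "0 < x - y" using assms by auto
    then have "(F has_real_derivative (x - y) powr (-b)) (at y)"
      using DERIV_cdivide[OF DERIV_minus[OF has_real_derivative_powr_diff[of y x "1 - b"]], of "1 - b"]
        \<open>b < 1\<close> unfolding F_def by simp
    then show "(F has_vector_derivative (x - y) powr (-b)) (at y)"
      by (simp add: has_real_derivative_iff_has_vector_derivative)
  qed
  then show ?thesis
    unfolding F_def by (simp add: diff_divide_distrib)
qed

lemma integrable_weight_times_continuous:
  fixes k g :: "real \<Rightarrow> real"
  assumes "k integrable_on {a..c}" "continuous_on {a<..<c} k" "\<And>\<tau>. \<tau> \<in> {a..c} \<Longrightarrow> 0 \<le> k \<tau>"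
    and "continuous_on {a..c} g"
  shows "(\<lambda>\<tau>. k \<tau> * g \<tau>) integrable_on {a..c}"
proof -
  obtain M where M: "\<And>\<tau>. \<tau> \<in> {a..c} \<Longrightarrow> norm (g \<tau>) \<le> M"
    using continuous_on_compact_bound[OF compact_Icc assms(4)] by blast
  show ?thesis
  proof (rule measurable_bounded_by_integrable_imp_integrable)
    show "(\<lambda>\<tau>. k \<tau> * g \<tau>) \<in> borel_measurable (lebesgue_on {a..c})"
      by (rule continuous_on_Ioo_imp_borel_measurable_Icc)
         (intro continuous_intros assms(2) continuous_on_subset[OF assms(4)], auto)
    show "(\<lambda>\<tau>. M * k \<tau>) integrable_on {a..c}"
      using assms(1) by (rule integrable_on_mult_right)
    fix \<tau> assume "\<tau> \<in> {a..c}"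
    then show "norm (k \<tau> * g \<tau>) \<le> M * k \<tau>"
      using M[of \<tau>] assms(3)[of \<tau>] by (simp add: abs_mult mult.commute[of M] mult_left_mono)
  qed auto
qed

lemma integrable_singular_kernel_times_continuous:
  fixes g :: "real \<Rightarrow> real"
  assumes "b < 1" "continuous_on {a..s} g" "a \<le> s" "s \<le> x"
  shows "(\<lambda>\<tau>. (x - \<tau>) powr (-b) * g \<tau>) integrable_on {a..s}"
proof (rule integrable_weight_times_continuous[OF _ _ _ assms(2)])
  show "(\<lambda>\<tau>. (x - \<tau>) powr (-b)) integrable_on {a..s}"
    using has_integral_singular_kernel[OF assms(1,3,4)] by blast
  show "continuous_on {a<..<s} (\<lambda>\<tau>. (x - \<tau>) powr (-b))"
    using assms by (intro continuous_intros) auto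
qed auto

lemma integrable_powr_times_continuous:
  fixes g :: "real \<Rightarrow> real"
  assumes "b < 1" "continuous_on {0..T} g"
  shows "(\<lambda>t. t powr (-b) * g t) integrable_on {0..T}"
proof (cases "0 \<le> T")
  case True
  show ?thesis
  proof (rule integrable_weight_times_continuous[OF _ _ _ assms(2)])
    show "(\<lambda>t. t powr (-b)) integrable_on {0..T}"
      using integrable_on_powr_from_0[of "-b" T] assms True by auto
  qed (auto intro!: continuous_intros)
qed auto

lemma integrable_endpoint_singular_weight:
  fixes g :: "real \<Rightarrow> real"
  assumes "b < 1" "0 \<le> T" "continuous_on {0..T} g"
  shows "(\<lambda>t. ((T - t) powr (-b) + t powr (-b)) * g t) integrable_on {0..T}"
  using integrable_add[OF integrable_singular_kernel_times_continuous[OF assms(1,3,2) order_refl]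
      integrable_powr_times_continuous[OF assms(1,3)]]
  by (simp add: algebra_simps)

lemma singular_kernel_integral_bound:
  fixes \<rho> :: "real \<Rightarrow> real"
  assumes "b < 1" "a \<le> c" "c \<le> x" "continuous_on {a..c} \<rho>"
    and "\<And>\<tau>. \<tau> \<in> {a..c} \<Longrightarrow> \<bar>\<rho> \<tau>\<bar> \<le> B"
  shows "\<bar>integral {a..c} (\<lambda>\<tau>. (x - \<tau>) powr (-b) * \<rho> \<tau>)\<bar>
           \<le> B * (((x - a) powr (1 - b) - (x - c) powr (1 - b)) / (1 - b))"
proof -
  note kernel = has_integral_mult_right[OF has_integral_singular_kernel[OF assms(1-3)], of B]
  have "norm (integral {a..c} (\<lambda>\<tau>. (x - \<tau>) powr (-b) * \<rho> \<tau>))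
          \<le> integral {a..c} (\<lambda>\<tau>. B * (x - \<tau>) powr (-b))"
  proof (rule Henstock_Kurzweil_Integration.integral_norm_bound_integral)
    show "(\<lambda>\<tau>. (x - \<tau>) powr (-b) * \<rho> \<tau>) integrable_on {a..c}"
      by (rule integrable_singular_kernel_times_continuous[OF assms(1,4,2,3)])
    show "(\<lambda>\<tau>. B * (x - \<tau>) powr (-b)) integrable_on {a..c}"
      using kernel by blast
    fix \<tau> assume "\<tau> \<in> {a..c}"
    then show "norm ((x - \<tau>) powr (-b) * \<rho> \<tau>) \<le> B * (x - \<tau>) powr (-b)"
      using assms(5) by (simp add: abs_mult mult.commute mult_right_mono)
  qed
  then show ?thesis
    using integral_unique[OF kernel] by simp
qed

lemma has_real_derivative_imp_pointwise_lipschitz: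
  fixes \<zeta> :: "real \<Rightarrow> real"
  assumes "compact S" "continuous_on S \<zeta>" "t \<in> S" "(\<zeta> has_real_derivative d) (at t)"
  obtains C where "\<And>\<tau>. \<tau> \<in> S \<Longrightarrow> \<bar>\<zeta> \<tau> - \<zeta> t\<bar> \<le> C * \<bar>\<tau> - t\<bar>"
proof -
  obtain M where M: "\<And>y. y \<in> S \<Longrightarrow> norm (\<zeta> y) \<le> M"
    using continuous_on_compact_bound[OF assms(1,2)] by blast
  have "((\<lambda>y. (\<zeta> y - \<zeta> t) / (y - t)) \<longlongrightarrow> d) (at t)"
    using assms(4) by (simp add: has_field_derivative_iff)
  then have "\<forall>\<^sub>F y in at t. dist ((\<zeta> y - \<zeta> t) / (y - t)) d < 1"
    by (rule tendstoD) simp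
  then obtain \<delta> where "\<delta> > 0"
    and near: "\<And>y. y \<noteq> t \<Longrightarrow> dist y t < \<delta> \<Longrightarrow> dist ((\<zeta> y - \<zeta> t) / (y - t)) d < 1"
    by (auto simp: eventually_at)
  have "\<bar>\<zeta> y - \<zeta> t\<bar> \<le> (\<bar>d\<bar> + 1 + 2 * M / \<delta>) * \<bar>y - t\<bar>" if "y \<in> S" for y
  proof (cases "\<bar>y - t\<bar> < \<delta>")
    case True
    show ?thesis
    proof (cases "y = t")
      case False
      then have "\<bar>(\<zeta> y - \<zeta> t) / (y - t) - d\<bar> < 1"
        using near[of y] True by (simp add: dist_real_def)
      then have "\<bar>(\<zeta> y - \<zeta> t) / (y - t)\<bar> \<le> \<bar>d\<bar> + 1"
        by linarith
      then have "\<bar>\<zeta> y - \<zeta> t\<bar> \<le> (\<bar>d\<bar> + 1) * \<bar>y - t\<bar>"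
        using False by (simp add: abs_divide divide_le_eq)
      also have "\<dots> \<le> (\<bar>d\<bar> + 1 + 2 * M / \<delta>) * \<bar>y - t\<bar>"
        using M[OF \<open>y \<in> S\<close>] \<open>\<delta> > 0\<close> by (intro mult_right_mono) auto
      finally show ?thesis .
    qed simp
  next
    case False
    have "\<bar>\<zeta> y - \<zeta> t\<bar> \<le> 2 * M / \<delta> * \<delta>"
      using M[OF \<open>y \<in> S\<close>] M[OF \<open>t \<in> S\<close>] \<open>\<delta> > 0\<close> by auto
    also have "\<dots> \<le> 2 * M / \<delta> * \<bar>y - t\<bar>"
      using False M[OF \<open>y \<in> S\<close>] \<open>\<delta> > 0\<close> by (intro mult_left_mono) auto
    also have "\<dots> \<le> (\<bar>d\<bar> + 1 + 2 * M / \<delta>) * \<bar>y - t\<bar>"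
      by (intro mult_right_mono) auto
    finally show ?thesis .
  qed
  then show ?thesis
    using that by blast
qed

lemma powr_neg_increment_bounds:
  fixes b r h :: real
  assumes "0 < b" "0 < r" "0 < h"
  shows "0 \<le> r powr (-b) - (r + h) powr (-b)" "r powr (-b) - (r + h) powr (-b) \<le> h * b * r powr (-b - 1)"
proof -
  obtain z where z: "r < z" "z < r + h" "(r + h) powr (-b) - r powr (-b) = (r + h - r) * (-b * z powr (-b - 1))"
  proof (rule MVT2[of r "r + h" "\<lambda>x. x powr (-b)" "\<lambda>x. -b * x powr (-b - 1)", elim_format])
    fix x assume "r \<le> x" "x \<le> r + h"
    then show "((\<lambda>x. x powr (-b)) has_real_derivative -b * x powr (-b - 1)) (at x)"
      using has_real_derivative_powr[of x "-b"] assms(2) by simp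
  qed (use assms(3) in auto)
  then have eq: "r powr (-b) - (r + h) powr (-b) = h * b * z powr (-b - 1)"
    by (simp add: algebra_simps)
  show "0 \<le> r powr (-b) - (r + h) powr (-b)"
    unfolding eq using assms by simp
  have "z powr (-b - 1) \<le> r powr (-b - 1)"
    using z assms by (intro powr_mono2') auto
  then show "r powr (-b) - (r + h) powr (-b) \<le> h * b * r powr (-b - 1)"
    unfolding eq using assms by (intro mult_left_mono) auto
qed

lemma powr_neg_difference_quotient_bound:
  fixes b r h :: real
  assumes "0 < b" "b < 1" "0 < r" "h \<noteq> 0" "2 * \<bar>h\<bar> \<le> r"
  shows "\<bar>((r + h) powr (-b) - r powr (-b)) / h\<bar> * r \<le> 4 * b * r powr (-b)"
proof (cases "0 < h")
  case True
  note bounds = powr_neg_increment_bounds[OF assms(1,3) True]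
  have "\<bar>((r + h) powr (-b) - r powr (-b)) / h\<bar> * r = (r powr (-b) - (r + h) powr (-b)) / h * r"
    using bounds(1) True by (simp add: abs_divide abs_minus_commute)
  also have "\<dots> \<le> b * r powr (-b - 1) * r"
    using bounds(2) True assms(3) by (intro mult_right_mono) (auto simp: divide_le_eq mult_ac)
  also have "\<dots> = b * r powr (-b)"
    using assms(3) powr_mult_base[of r "-b - 1"] by (simp add: mult_ac)
  also have "\<dots> \<le> 4 * b * r powr (-b)"
    using assms(1) by simp
  finally show ?thesis .
next
  case False
  define w where "w = - h"
  have w: "0 < w" "2 * w \<le> r"
    using False assms(4,5) unfolding w_def by auto
  then have "0 < r - w"
    by simp
  note bounds = powr_neg_increment_bounds[OF assms(1) this w(1), simplified]
  have "\<bar>((r + h) powr (-b) - r powr (-b)) / h\<bar> * r = ((r - w) powr (-b) - r powr (-b)) / w * r"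
    using bounds(1) w by (simp add: w_def abs_divide)
  also have "\<dots> \<le> b * (r - w) powr (-b - 1) * r"
    using bounds(2) w assms(3) by (intro mult_right_mono) (auto simp: divide_le_eq mult_ac)
  also have "\<dots> \<le> b * (r - w) powr (-b - 1) * (2 * (r - w))"
    using w assms(1) by (intro mult_left_mono) auto
  also have "\<dots> = 2 * b * ((r - w) * (r - w) powr (-b - 1))"
    by (simp only: mult_ac)
  also have "\<dots> = 2 * b * (r - w) powr (-b)"
    using \<open>0 < r - w\<close> powr_mult_base[of "r - w" "-b - 1"] by simp
  also have "(r - w) powr (-b) \<le> (r / 2) powr (-b)"
    using w assms(1) by (intro powr_mono2') auto
  also have "(r / 2) powr (-b) = 2 powr b * r powr (-b)"
    by (simp add: powr_divide powr_minus_divide)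
  also have "2 powr b \<le> 2"
    using powr_mono[of b 1 2] assms(2) by simp
  finally show ?thesis
    using assms(1,3) by (simp add: mult_left_mono mult_right_mono)
qed

lemma singular_difference_quotient_bound:
  fixes b t h \<tau> :: real
  assumes "0 < b" "b < 1" "h \<noteq> 0" "2 * \<bar>h\<bar> \<le> t - \<tau>" "\<bar>r\<bar> \<le> C * (t - \<tau>)"
  shows "\<bar>((t + h - \<tau>) powr (-b) - (t - \<tau>) powr (-b)) / h * r\<bar> \<le> 4 * b * C * (t - \<tau>) powr (-b)"
proof -
  have "0 < t - \<tau>"
    using assms(3,4) by auto
  moreover have "0 \<le> C * (t - \<tau>)"
    using assms(5) by (rule order_trans[OF abs_ge_zero])
  ultimately have "0 \<le> C"
    by (simp add: zero_le_mult_iff)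
  have "t + h - \<tau> = t - \<tau> + h"
    by simp
  then have "\<bar>((t + h - \<tau>) powr (-b) - (t - \<tau>) powr (-b)) / h * r\<bar>
      = \<bar>((t - \<tau> + h) powr (-b) - (t - \<tau>) powr (-b)) / h\<bar> * \<bar>r\<bar>"
    by (simp only: abs_mult)
  also have "\<dots> \<le> \<bar>((t - \<tau> + h) powr (-b) - (t - \<tau>) powr (-b)) / h\<bar> * (C * (t - \<tau>))"
    using assms(5) by (rule mult_left_mono) simp
  also have "\<dots> = \<bar>((t - \<tau> + h) powr (-b) - (t - \<tau>) powr (-b)) / h\<bar> * (t - \<tau>) * C"
    by (simp only: mult_ac)
  also have "\<dots> \<le> 4 * b * (t - \<tau>) powr (-b) * C"
    using powr_neg_difference_quotient_bound[OF assms(1,2) \<open>0 < t - \<tau>\<close> assms(3,4)] \<open>0 \<le> C\<close>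
    by (rule mult_right_mono)
  finally show ?thesis
    by (simp add: mult_ac)
qed

subsection \<open>The Marchaud form of the Caputo integral\<close>

lemma integrable_marchaud_integrand:
  fixes \<zeta> :: "real \<Rightarrow> real"
  assumes "b < 1" "0 \<le> t" "continuous_on {0..t} \<zeta>"
    and lip: "\<And>\<tau>. \<tau> \<in> {0..t} \<Longrightarrow> \<bar>\<zeta> \<tau> - \<zeta> t\<bar> \<le> C * \<bar>\<tau> - t\<bar>"
  shows "(\<lambda>\<tau>. b * (t - \<tau>) powr (-b - 1) * (\<zeta> t - \<zeta> \<tau>)) integrable_on {0..t}"
proof (rule measurable_bounded_by_integrable_imp_integrable)
  show "(\<lambda>\<tau>. b * (t - \<tau>) powr (-b - 1) * (\<zeta> t - \<zeta> \<tau>)) \<in> borel_measurable (lebesgue_on {0..t})"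
    by (rule continuous_on_Ioo_imp_borel_measurable_Icc)
       (intro continuous_intros continuous_on_subset[OF assms(3)], auto)
  show "(\<lambda>\<tau>. \<bar>b\<bar> * C * (t - \<tau>) powr (-b)) integrable_on {0..t}"
    using has_integral_singular_kernel[OF assms(1,2) order_refl]
    by (intro integrable_on_mult_right) blast
  fix \<tau> assume \<tau>: "\<tau> \<in> {0..t}"
  have "norm (b * (t - \<tau>) powr (-b - 1) * (\<zeta> t - \<zeta> \<tau>)) = \<bar>b\<bar> * (t - \<tau>) powr (-b - 1) * \<bar>\<zeta> \<tau> - \<zeta> t\<bar>"
    by (simp add: abs_mult abs_minus_commute)
  also have "\<dots> \<le> \<bar>b\<bar> * (t - \<tau>) powr (-b - 1) * (C * (t - \<tau>))"
    using lip[OF \<tau>] \<tau> by (intro mult_left_mono) auto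
  also have "\<dots> = \<bar>b\<bar> * C * ((t - \<tau>) * (t - \<tau>) powr (-b - 1))"
    by (simp add: algebra_simps)
  also have "\<dots> = \<bar>b\<bar> * C * (t - \<tau>) powr (-b)"
    using \<tau> by (simp add: powr_mult_base)
  finally show "norm (b * (t - \<tau>) powr (-b - 1) * (\<zeta> t - \<zeta> \<tau>)) \<le> \<bar>b\<bar> * C * (t - \<tau>) powr (-b)" .
qed auto

lemma tendsto_singular_kernel_times_lipschitz:
  fixes \<zeta> :: "real \<Rightarrow> real"
  assumes "b < 1" "0 < t" and lip: "\<And>s. s \<in> {0..t} \<Longrightarrow> \<bar>\<zeta> s - \<zeta> t\<bar> \<le> C * \<bar>s - t\<bar>"
  shows "((\<lambda>s. (t - s) powr (-b) * (\<zeta> s - \<zeta> t)) \<longlongrightarrow> 0) (at_left t)"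
proof (rule Lim_null_comparison)
  show "\<forall>\<^sub>F s in at_left t. norm ((t - s) powr (-b) * (\<zeta> s - \<zeta> t)) \<le> C * (t - s) powr (1 - b)"
    using eventually_at_left_real[OF \<open>0 < t\<close>]
  proof eventually_elim
    case (elim s)
    have "norm ((t - s) powr (-b) * (\<zeta> s - \<zeta> t)) \<le> (t - s) powr (-b) * (C * (t - s))"
      using lip[of s] elim by (simp add: abs_mult mult_left_mono)
    also have "\<dots> = C * ((t - s) * (t - s) powr (-b))"
      by (simp add: mult_ac)
    also have "\<dots> = C * (t - s) powr (1 - b)"
      using elim by (simp add: powr_mult_base)
    finally show ?case .
  qed
  have "((\<lambda>s. (t - s) powr (1 - b)) \<longlongrightarrow> 0) (at_left t)"
  proof (rule tendsto_zero_powrI)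
    show "((\<lambda>s. t - s) \<longlongrightarrow> 0) (at_left t)"
      using tendsto_diff[OF tendsto_const[of t] tendsto_ident_at[of t "{..<t}"]] by simp
    show "\<forall>\<^sub>F s in at_left t. 0 \<le> t - s"
      using eventually_at_left_real[OF \<open>0 < t\<close>] by eventually_elim auto
  qed (use \<open>b < 1\<close> in auto)
  then show "((\<lambda>s. C * (t - s) powr (1 - b)) \<longlongrightarrow> 0) (at_left t)"
    by (rule tendsto_mult_right_zero)
qed

lemma has_integral_caputo_minus_marchaud_integrand:
  fixes \<zeta> \<zeta>' :: "real \<Rightarrow> real"
  assumes "0 \<le> s" "s < t" "continuous_on {0..s} \<zeta>"
    and der: "\<And>\<tau>. \<tau> \<in> {0<..<s} \<Longrightarrow> (\<zeta> has_real_derivative \<zeta>' \<tau>) (at \<tau>)"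
  shows "((\<lambda>\<tau>. (t - \<tau>) powr (-b) * \<zeta>' \<tau> - b * (t - \<tau>) powr (-b - 1) * (\<zeta> t - \<zeta> \<tau>)) has_integral
           (t - s) powr (-b) * (\<zeta> s - \<zeta> t) + t powr (-b) * (\<zeta> t - \<zeta> 0)) {0..s}"
proof -
  define F where "F = (\<lambda>\<tau>. (t - \<tau>) powr (-b) * (\<zeta> \<tau> - \<zeta> t))"
  have "((\<lambda>\<tau>. (t - \<tau>) powr (-b) * \<zeta>' \<tau> - b * (t - \<tau>) powr (-b - 1) * (\<zeta> t - \<zeta> \<tau>)) has_integral F s - F 0) {0..s}"
  proof (rule fundamental_theorem_of_calculus_interior[OF assms(1)])
    show "continuous_on {0..s} F"
      unfolding F_def using assms(2) by (intro continuous_intros assms(3)) auto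
    fix y assume y: "y \<in> {0<..<s}"
    then have "((\<lambda>\<tau>. \<zeta> \<tau> - \<zeta> t) has_real_derivative \<zeta>' y) (at y)"
      using DERIV_diff[OF der DERIV_const, of y "\<zeta> t"] by simp
    then have "(F has_real_derivative
        - (- b * (t - y) powr (-b - 1)) * (\<zeta> y - \<zeta> t) + \<zeta>' y * (t - y) powr (-b)) (at y)"
      unfolding F_def using assms(2) y by (intro DERIV_mult has_real_derivative_powr_diff) auto
    then show "(F has_vector_derivative
        (t - y) powr (-b) * \<zeta>' y - b * (t - y) powr (-b - 1) * (\<zeta> t - \<zeta> y)) (at y)"
      by (simp add: has_real_derivative_iff_has_vector_derivative algebra_simps)
  qed
  then show ?thesis
    unfolding F_def by (simp add: algebra_simps)
qed

text \<open>Integration by parts on \<open>[0, s]\<close>, \<open>s < t\<close>; the boundary term at \<open>s\<close> vanishes as \<open>s \<rightarrow> t\<close> by the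
  pointwise Lipschitz bound.\<close>

lemma caputo_integral_eq_marchaud:
  fixes \<zeta> \<zeta>' :: "real \<Rightarrow> real"
  assumes "b < 1" "0 < t" and cont: "continuous_on {0..t} \<zeta>"
    and lip: "\<And>\<tau>. \<tau> \<in> {0..t} \<Longrightarrow> \<bar>\<zeta> \<tau> - \<zeta> t\<bar> \<le> C * \<bar>\<tau> - t\<bar>"
    and der: "\<And>\<tau>. \<tau> \<in> {0<..<t} \<Longrightarrow> (\<zeta> has_real_derivative \<zeta>' \<tau>) (at \<tau>)"
    and int: "(\<lambda>\<tau>. (t - \<tau>) powr (-b) * \<zeta>' \<tau>) integrable_on {0..t}"
  shows "integral {0..t} (\<lambda>\<tau>. (t - \<tau>) powr (-b) * \<zeta>' \<tau>)
           = t powr (-b) * (\<zeta> t - \<zeta> 0) + marchaud_integral b \<zeta> t"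
proof -
  define k where "k = (\<lambda>\<tau>. (t - \<tau>) powr (-b) * \<zeta>' \<tau>)"
  define m where "m = (\<lambda>\<tau>. b * (t - \<tau>) powr (-b - 1) * (\<zeta> t - \<zeta> \<tau>))"
  define F where "F = (\<lambda>s. (t - s) powr (-b) * (\<zeta> s - \<zeta> t) + t powr (-b) * (\<zeta> t - \<zeta> 0))"
  have m_int: "m integrable_on {0..t}"
    unfolding m_def using integrable_marchaud_integrand[OF assms(1) _ cont lip] assms(2) by simp
  have partial: "integral {0..s} k = F s + integral {0..s} m" if s: "s \<in> {0<..<t}" for s
  proof -
    have "((\<lambda>\<tau>. k \<tau> - m \<tau>) has_integral F s) {0..s}"
      unfolding k_def m_def F_def using s der
      by (intro has_integral_caputo_minus_marchaud_integrand continuous_on_subset[OF cont]) auto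
    moreover have "k integrable_on {0..s}" "m integrable_on {0..s}"
      using integrable_on_subinterval[OF int[folded k_def]] integrable_on_subinterval[OF m_int] s
      by auto
    ultimately show ?thesis
      using integral_diff[of k "{0..s}" m] by (simp add: integral_unique)
  qed
  have "((\<lambda>s. F s + integral {0..s} m) \<longlongrightarrow> 0 + t powr (-b) * (\<zeta> t - \<zeta> 0) + integral {0..t} m) (at_left t)"
    unfolding F_def
    by (intro tendsto_intros tendsto_singular_kernel_times_lipschitz[OF assms(1,2) lip]
          tendsto_integral_Icc_at_left[OF m_int assms(2)])
  moreover have "\<forall>\<^sub>F s in at_left t. F s + integral {0..s} m = integral {0..s} k"
    using eventually_at_left_real[OF assms(2)] by eventually_elim (simp add: partial)
  ultimately have "((\<lambda>s. integral {0..s} k) \<longlongrightarrow> t powr (-b) * (\<zeta> t - \<zeta> 0) + integral {0..t} m) (at_left t)"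
    using Lim_transform_eventually by fastforce
  then have "integral {0..t} k = t powr (-b) * (\<zeta> t - \<zeta> 0) + integral {0..t} m"
    using tendsto_unique[OF trivial_limit_at_left_real tendsto_integral_Icc_at_left[OF _ assms(2)]]
      int[folded k_def] by blast
  then show ?thesis
    unfolding k_def m_def marchaud_integral_def .
qed

lemma marchaud_integral_diff_const:
  "marchaud_integral b (\<lambda>\<tau>. g \<tau> - c) t = marchaud_integral b g t"
  by (simp add: marchaud_integral_def)

subsection \<open>Continuity of the Riemann--Liouville integral\<close>

lemma rl_integral_shifted_kernel_bound:
  fixes g :: "real \<Rightarrow> real"
  assumes "0 < b" "b < 1" "continuous_on {0..x} g" "\<And>\<tau>. \<tau> \<in> {0..x} \<Longrightarrow> \<bar>g \<tau>\<bar> \<le> M"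
    and "0 \<le> x" "x \<le> y"
  shows "\<bar>integral {0..x} (\<lambda>\<tau>. (y - \<tau>) powr (-b) * g \<tau>) - rl_integral b g x\<bar>
           \<le> M * ((y - x) powr (1 - b) / (1 - b))"
proof -
  have "((\<lambda>\<tau>. (x - \<tau>) powr (-b) - (y - \<tau>) powr (-b)) has_integral
      x powr (1 - b) / (1 - b) - (y powr (1 - b) - (y - x) powr (1 - b)) / (1 - b)) {0..x}"
    using has_integral_diff[OF has_integral_singular_kernel[of b 0 x x] has_integral_singular_kernel[of b 0 x y]]
      assms by simp
  note kernels = has_integral_mult_right[OF this, of M]
  have int_x: "(\<lambda>\<tau>. (x - \<tau>) powr (-b) * g \<tau>) integrable_on {0..x}"
    and int_y: "(\<lambda>\<tau>. (y - \<tau>) powr (-b) * g \<tau>) integrable_on {0..x}"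
    using integrable_singular_kernel_times_continuous[OF assms(2,3)] assms(5,6) by auto
  have "\<bar>integral {0..x} (\<lambda>\<tau>. (y - \<tau>) powr (-b) * g \<tau>) - rl_integral b g x\<bar>
        = norm (integral {0..x} (\<lambda>\<tau>. (y - \<tau>) powr (-b) * g \<tau> - (x - \<tau>) powr (-b) * g \<tau>))"
    unfolding rl_integral_def integral_diff[OF int_y int_x] by simp
  also have "\<dots> \<le> integral {0..x} (\<lambda>\<tau>. M * ((x - \<tau>) powr (-b) - (y - \<tau>) powr (-b)))"
  proof (rule integral_norm_bound_integral_off_negligible[of _ _ _ "{x}"])
    show "(\<lambda>\<tau>. (y - \<tau>) powr (-b) * g \<tau> - (x - \<tau>) powr (-b) * g \<tau>) integrable_on {0..x}"
      using int_y int_x by (rule integrable_diff)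
    fix \<tau> assume \<tau>: "\<tau> \<in> {0..x} - {x}"
    then have "(y - \<tau>) powr (-b) \<le> (x - \<tau>) powr (-b)"
      using assms by (intro powr_mono2') auto
    with assms(4)[of \<tau>] \<tau> have "\<bar>g \<tau>\<bar> * \<bar>(y - \<tau>) powr (-b) - (x - \<tau>) powr (-b)\<bar>
                       \<le> M * ((x - \<tau>) powr (-b) - (y - \<tau>) powr (-b))"
      by (simp add: mult_mono)
    then show "norm ((y - \<tau>) powr (-b) * g \<tau> - (x - \<tau>) powr (-b) * g \<tau>)
                 \<le> M * ((x - \<tau>) powr (-b) - (y - \<tau>) powr (-b))"
      by (simp add: abs_mult mult.commute[of _ "g \<tau>"] flip: right_diff_distrib)
  qed (use kernels in auto)
  also have "\<dots> = M * ((x powr (1 - b) - (y powr (1 - b) - (y - x) powr (1 - b))) / (1 - b))"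
    using integral_unique[OF kernels] by (simp add: diff_divide_distrib)
  also have "\<dots> \<le> M * ((y - x) powr (1 - b) / (1 - b))"
  proof -
    have "x powr (1 - b) \<le> y powr (1 - b)"
      using assms by (intro powr_mono2) auto
    moreover have "0 \<le> M"
      using assms(4)[of 0] assms(5) by auto
    ultimately show ?thesis
      using assms(2) by (intro mult_left_mono divide_right_mono) auto
  qed
  finally show ?thesis .
qed

lemma rl_integral_holder_ordered:
  fixes g :: "real \<Rightarrow> real"
  assumes "0 < b" "b < 1" "continuous_on {0..y} g" "\<And>\<tau>. \<tau> \<in> {0..y} \<Longrightarrow> \<bar>g \<tau>\<bar> \<le> M"
    and "0 \<le> x" "x \<le> y"
  shows "\<bar>rl_integral b g y - rl_integral b g x\<bar> \<le> 2 * M * (y - x) powr (1 - b) / (1 - b)"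
proof -
  have split: "rl_integral b g y = integral {0..x} (\<lambda>\<tau>. (y - \<tau>) powr (-b) * g \<tau>)
                 + integral {x..y} (\<lambda>\<tau>. (y - \<tau>) powr (-b) * g \<tau>)"
    unfolding rl_integral_def
    using Henstock_Kurzweil_Integration.integral_combine[OF assms(5,6)
        integrable_singular_kernel_times_continuous[OF assms(2,3)]] assms(5,6)
    by simp
  have "\<bar>integral {x..y} (\<lambda>\<tau>. (y - \<tau>) powr (-b) * g \<tau>)\<bar> \<le> M * ((y - x) powr (1 - b) / (1 - b))"
    using singular_kernel_integral_bound[OF assms(2,6) order_refl continuous_on_subset[OF assms(3)], of M]
      assms(4,5) by auto
  moreover have "\<bar>integral {0..x} (\<lambda>\<tau>. (y - \<tau>) powr (-b) * g \<tau>) - rl_integral b g x\<bar>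
      \<le> M * ((y - x) powr (1 - b) / (1 - b))"
    using assms(4-6) by (intro rl_integral_shifted_kernel_bound[OF assms(1,2) continuous_on_subset[OF assms(3)]]) auto
  moreover have "2 * M * (y - x) powr (1 - b) / (1 - b) = 2 * (M * ((y - x) powr (1 - b) / (1 - b)))"
    by simp
  ultimately show ?thesis
    using split by linarith
qed

lemma rl_integral_holder:
  fixes g :: "real \<Rightarrow> real"
  assumes "0 < b" "b < 1" "continuous_on {0..S} g" "\<And>\<tau>. \<tau> \<in> {0..S} \<Longrightarrow> \<bar>g \<tau>\<bar> \<le> M"
    and "x \<in> {0..S}" "y \<in> {0..S}"
  shows "\<bar>rl_integral b g y - rl_integral b g x\<bar> \<le> 2 * M * \<bar>y - x\<bar> powr (1 - b) / (1 - b)"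
proof -
  have "\<bar>rl_integral b g q - rl_integral b g p\<bar> \<le> 2 * M * \<bar>q - p\<bar> powr (1 - b) / (1 - b)"
    if "p \<in> {0..S}" "q \<in> {0..S}" "p \<le> q" for p q
    using rl_integral_holder_ordered[OF assms(1,2) continuous_on_subset[OF assms(3)], of q M p] assms(4) that
    by auto
  from this[of x y] this[of y x] assms(5,6) show ?thesis
    by (cases "x \<le> y") (auto simp: abs_minus_commute)
qed

lemma tendsto_powr_abs_diff_zero:
  fixes t0 e :: real
  assumes "0 < e"
  shows "((\<lambda>t. K * \<bar>t - t0\<bar> powr e) \<longlongrightarrow> 0) (at t0 within S)"
proof -
  have "((\<lambda>t. \<bar>t - t0\<bar>) \<longlongrightarrow> 0) (at t0 within S)"
    using tendsto_rabs_zero[OF LIM_zero[OF tendsto_ident_at]] .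
  then have "((\<lambda>t. \<bar>t - t0\<bar> powr e) \<longlongrightarrow> 0) (at t0 within S)"
    by (rule tendsto_zero_powrI) (use assms in auto)
  then show ?thesis
    by (rule tendsto_mult_right_zero)
qed

lemma continuous_on_rl_integral:
  fixes g :: "real \<Rightarrow> real"
  assumes "0 < b" "b < 1" "continuous_on {0..S} g"
  shows "continuous_on {0..S} (rl_integral b g)"
  unfolding continuous_on_def
proof
  fix t0 assume t0: "t0 \<in> {0..S}"
  obtain M where M: "\<And>\<tau>. \<tau> \<in> {0..S} \<Longrightarrow> norm (g \<tau>) \<le> M"
    using continuous_on_compact_bound[OF compact_Icc assms(3)] by blast
  have "((\<lambda>t. rl_integral b g t - rl_integral b g t0) \<longlongrightarrow> 0) (at t0 within {0..S})"
  proof (rule Lim_null_comparison)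
    show "\<forall>\<^sub>F t in at t0 within {0..S}.
            norm (rl_integral b g t - rl_integral b g t0) \<le> 2 * M / (1 - b) * \<bar>t - t0\<bar> powr (1 - b)"
      using rl_integral_holder[OF assms, of M t0] M t0 by (auto simp: eventually_at_filter)
  qed (rule tendsto_powr_abs_diff_zero, use assms(2) in simp)
  then show "(rl_integral b g \<longlongrightarrow> rl_integral b g t0) (at t0 within {0..S})"
    by (rule LIM_zero_cancel)
qed

lemma rl_integral_inner_right_diff_bound:
  fixes v :: "real \<Rightarrow> 'a::real_inner"
  assumes "b < 1" "0 \<le> x" "continuous_on {0..x} v" "\<And>\<tau>. \<tau> \<in> {0..x} \<Longrightarrow> norm (v \<tau>) \<le> M"
  shows "\<bar>rl_integral b (\<lambda>\<tau>. inner (v \<tau>) z) x - rl_integral b (\<lambda>\<tau>. inner (v \<tau>) z') x\<bar>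
           \<le> M * norm (z - z') * (x powr (1 - b) / (1 - b))"
proof -
  have int: "(\<lambda>\<tau>. (x - \<tau>) powr (-b) * inner (v \<tau>) y) integrable_on {0..x}" for y
    by (intro integrable_singular_kernel_times_continuous continuous_intros assms) auto
  have "rl_integral b (\<lambda>\<tau>. inner (v \<tau>) z) x - rl_integral b (\<lambda>\<tau>. inner (v \<tau>) z') x
        = integral {0..x} (\<lambda>\<tau>. (x - \<tau>) powr (-b) * inner (v \<tau>) (z - z'))"
    unfolding rl_integral_def integral_diff[OF int int, symmetric]
    by (simp add: inner_diff_right algebra_simps)
  also have "\<bar>\<dots>\<bar> \<le> M * norm (z - z') * (((x - 0) powr (1 - b) - (x - x) powr (1 - b)) / (1 - b))"
  proof (rule singular_kernel_integral_bound[OF assms(1,2) order_refl])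
    fix \<tau> assume "\<tau> \<in> {0..x}"
    then show "\<bar>inner (v \<tau>) (z - z')\<bar> \<le> M * norm (z - z')"
      using Cauchy_Schwarz_ineq2[of "v \<tau>" "z - z'"] assms(4)
      by (meson mult_right_mono norm_ge_zero order_trans)
  qed (intro continuous_intros assms)
  finally show ?thesis
    by simp
qed

lemma rl_integral_inner_diff_bound:
  fixes v :: "real \<Rightarrow> 'a::real_inner"
  assumes "0 < b" "b < 1" "continuous_on {0..S} v" "\<And>\<tau>. \<tau> \<in> {0..S} \<Longrightarrow> norm (v \<tau>) \<le> Mv"
    and "norm z \<le> Mz" "x \<in> {0..S}" "y \<in> {0..S}"
  shows "\<bar>rl_integral b (\<lambda>\<tau>. inner (v \<tau>) z) y - rl_integral b (\<lambda>\<tau>. inner (v \<tau>) z') x\<bar>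
           \<le> 2 * (Mv * Mz) / (1 - b) * \<bar>y - x\<bar> powr (1 - b) + Mv * S powr (1 - b) / (1 - b) * norm (z - z')"
proof -
  have "norm (v x) \<le> Mv"
    using assms(4,6) by blast
  then have "0 \<le> Mv"
    by (rule order_trans[OF norm_ge_zero])
  have "\<bar>inner (v \<tau>) z\<bar> \<le> Mv * Mz" if "\<tau> \<in> {0..S}" for \<tau>
    using Cauchy_Schwarz_ineq2[of "v \<tau>" z] mult_mono[OF assms(4)[OF that] assms(5) \<open>0 \<le> Mv\<close> norm_ge_zero]
    by (rule order_trans)
  with rl_integral_holder[OF assms(1,2) _ _ assms(6,7)] assms(3)
  have "\<bar>rl_integral b (\<lambda>\<tau>. inner (v \<tau>) z) y - rl_integral b (\<lambda>\<tau>. inner (v \<tau>) z) x\<bar>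
          \<le> 2 * (Mv * Mz) / (1 - b) * \<bar>y - x\<bar> powr (1 - b)"
    by (simp add: continuous_intros)
  moreover have "\<bar>rl_integral b (\<lambda>\<tau>. inner (v \<tau>) z) x - rl_integral b (\<lambda>\<tau>. inner (v \<tau>) z') x\<bar>
                   \<le> Mv * S powr (1 - b) / (1 - b) * norm (z - z')"
  proof -
    have "\<bar>rl_integral b (\<lambda>\<tau>. inner (v \<tau>) z) x - rl_integral b (\<lambda>\<tau>. inner (v \<tau>) z') x\<bar>
            \<le> Mv * norm (z - z') * (x powr (1 - b) / (1 - b))"
      using assms by (intro rl_integral_inner_right_diff_bound continuous_on_subset[OF assms(3)]) auto
    also have "\<dots> \<le> Mv * norm (z - z') * (S powr (1 - b) / (1 - b))"
      using assms(2,6) \<open>0 \<le> Mv\<close> by (intro mult_left_mono divide_right_mono powr_mono2) auto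
    finally show ?thesis
      by (simp add: mult_ac)
  qed
  ultimately show ?thesis
    by linarith
qed

lemma continuous_on_rl_integral_inner_shifted:
  fixes v w :: "real \<Rightarrow> 'a::real_inner"
  assumes "0 < b" "b < 1" "continuous_on {0..S} v" "continuous_on {0..T} w" "0 \<le> e" "T + e \<le> S"
  shows "continuous_on {0..T} (\<lambda>t. rl_integral b (\<lambda>\<tau>. inner (v \<tau>) (w t)) (t + e))"
  unfolding continuous_on_def
proof
  fix t0 assume t0: "t0 \<in> {0..T}"
  obtain Mv where Mv: "\<And>\<tau>. \<tau> \<in> {0..S} \<Longrightarrow> norm (v \<tau>) \<le> Mv"
    using continuous_on_compact_bound[OF compact_Icc assms(3)] by blast
  obtain Mw where Mw: "\<And>t. t \<in> {0..T} \<Longrightarrow> norm (w t) \<le> Mw"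
    using continuous_on_compact_bound[OF compact_Icc assms(4)] by blast
  define K where "K = Mv * S powr (1 - b) / (1 - b)"
  have "((\<lambda>t. rl_integral b (\<lambda>\<tau>. inner (v \<tau>) (w t)) (t + e) - rl_integral b (\<lambda>\<tau>. inner (v \<tau>) (w t0)) (t0 + e))
          \<longlongrightarrow> 0) (at t0 within {0..T})"
  proof (rule Lim_null_comparison)
    show "\<forall>\<^sub>F t in at t0 within {0..T}.
            norm (rl_integral b (\<lambda>\<tau>. inner (v \<tau>) (w t)) (t + e) - rl_integral b (\<lambda>\<tau>. inner (v \<tau>) (w t0)) (t0 + e))
            \<le> 2 * (Mv * Mw) / (1 - b) * \<bar>t - t0\<bar> powr (1 - b) + K * norm (w t - w t0)"
      unfolding eventually_at_filter
    proof (intro always_eventually allI impI)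
      fix t assume "t \<in> {0..T}"
      with rl_integral_inner_diff_bound[OF assms(1-3) Mv Mw[OF this], of "t0 + e" "t + e" "w t0"] t0 assms(5,6)
      show "norm (rl_integral b (\<lambda>\<tau>. inner (v \<tau>) (w t)) (t + e) - rl_integral b (\<lambda>\<tau>. inner (v \<tau>) (w t0)) (t0 + e))
              \<le> 2 * (Mv * Mw) / (1 - b) * \<bar>t - t0\<bar> powr (1 - b) + K * norm (w t - w t0)"
        unfolding K_def by simp
    qed
    have "(w \<longlongrightarrow> w t0) (at t0 within {0..T})"
      using assms(4) t0 by (simp add: continuous_on_def)
    then have "((\<lambda>t. norm (w t - w t0)) \<longlongrightarrow> 0) (at t0 within {0..T})"
      by (intro tendsto_norm_zero LIM_zero)
    then have "((\<lambda>t. K * norm (w t - w t0)) \<longlongrightarrow> 0) (at t0 within {0..T})"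
      by (rule tendsto_mult_right_zero)
    then show "((\<lambda>t. 2 * (Mv * Mw) / (1 - b) * \<bar>t - t0\<bar> powr (1 - b) + K * norm (w t - w t0)) \<longlongrightarrow> 0)
                 (at t0 within {0..T})"
      by (intro tendsto_add_zero tendsto_powr_abs_diff_zero) (use assms(2) in simp)
  qed
  then show "((\<lambda>t. rl_integral b (\<lambda>\<tau>. inner (v \<tau>) (w t)) (t + e))
               \<longlongrightarrow> rl_integral b (\<lambda>\<tau>. inner (v \<tau>) (w t0)) (t0 + e)) (at t0 within {0..T})"
    by (rule LIM_zero_cancel)
qed

subsection \<open>Differentiability of the Riemann--Liouville integral\<close>

lemma rl_integral_minus_initial_part_bound:
  fixes \<rho> :: "real \<Rightarrow> real"
  assumes "b < 1" "0 \<le> s" "s \<le> x" "continuous_on {0..x} \<rho>" "\<And>\<tau>. \<tau> \<in> {s..x} \<Longrightarrow> \<bar>\<rho> \<tau>\<bar> \<le> B"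
  shows "\<bar>rl_integral b \<rho> x - integral {0..s} (\<lambda>\<tau>. (x - \<tau>) powr (-b) * \<rho> \<tau>)\<bar>
           \<le> B * ((x - s) powr (1 - b) / (1 - b))"
proof -
  have "rl_integral b \<rho> x - integral {0..s} (\<lambda>\<tau>. (x - \<tau>) powr (-b) * \<rho> \<tau>)
          = integral {s..x} (\<lambda>\<tau>. (x - \<tau>) powr (-b) * \<rho> \<tau>)"
    unfolding rl_integral_def
    using Henstock_Kurzweil_Integration.integral_combine[OF assms(2,3)
        integrable_singular_kernel_times_continuous[OF assms(1,4) _ order_refl]] assms(2,3)
    by simp
  also have "\<bar>\<dots>\<bar> \<le> B * (((x - s) powr (1 - b) - (x - x) powr (1 - b)) / (1 - b))"
    using assms by (intro singular_kernel_integral_bound continuous_on_subset[OF assms(4)]) auto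
  finally show ?thesis
    by simp
qed

text \<open>For \<open>x = t\<close> and \<open>x = t + h\<close>, \<open>rl_integral b \<rho> x\<close> differs from the integral over \<open>[0, t - 2\<bar>h\<bar>]\<close> by
  an integral over an interval of length at most \<open>3\<bar>h\<bar>\<close> on which \<open>\<bar>\<rho>\<bar> \<le> 2 C \<bar>h\<bar>\<close>, hence by
  \<open>O(\<bar>h\<bar> powr (2 - b))\<close>.\<close>

lemma rl_integral_difference_quotient_remainder:
  fixes \<rho> :: "real \<Rightarrow> real"
  assumes "b < 1" "continuous_on {0..T} \<rho>" and lip: "\<And>\<tau>. \<tau> \<in> {0..T} \<Longrightarrow> \<bar>\<rho> \<tau>\<bar> \<le> C * \<bar>\<tau> - t\<bar>"
    and h: "h \<noteq> 0" "2 * \<bar>h\<bar> \<le> t" "t + \<bar>h\<bar> \<le> T"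
  shows "\<bar>(rl_integral b \<rho> (t + h) - rl_integral b \<rho> t) / h
            - integral {0..t - 2 * \<bar>h\<bar>} (\<lambda>\<tau>. ((t + h - \<tau>) powr (-b) - (t - \<tau>) powr (-b)) / h * \<rho> \<tau>)\<bar>
           \<le> 4 * C * (3 * \<bar>h\<bar>) powr (1 - b) / (1 - b)"
proof -
  define s where "s = t - 2 * \<bar>h\<bar>"
  have s: "0 \<le> s" "s \<le> t" "s \<le> t + h"
    using h unfolding s_def by auto
  have "0 < t" "0 \<in> {0..T}"
    using h by auto
  then have "0 \<le> C * t"
    using lip[of 0] abs_ge_zero[of "\<rho> 0"] by simp
  with \<open>0 < t\<close> have "0 \<le> C"
    by (simp add: zero_le_mult_iff)
  have near: "\<bar>\<rho> \<tau>\<bar> \<le> 2 * C * \<bar>h\<bar>" if "\<tau> \<in> {s..t + \<bar>h\<bar>}" for \<tau>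
  proof -
    have "\<bar>\<rho> \<tau>\<bar> \<le> C * \<bar>\<tau> - t\<bar>"
      using lip[of \<tau>] that s h by auto
    also have "\<dots> \<le> C * (2 * \<bar>h\<bar>)"
      using that \<open>0 \<le> C\<close> unfolding s_def by (intro mult_left_mono) auto
    finally show ?thesis
      by simp
  qed
  have powr_le: "(x - s) powr (1 - b) \<le> (3 * \<bar>h\<bar>) powr (1 - b)" if "x \<in> {t, t + h}" for x
    using that assms(1) h unfolding s_def by (intro powr_mono2) auto
  define P where "P = (\<lambda>x. rl_integral b \<rho> x - integral {0..s} (\<lambda>\<tau>. (x - \<tau>) powr (-b) * \<rho> \<tau>))"
  have P_bound: "\<bar>P x\<bar> \<le> 2 * C * \<bar>h\<bar> * ((3 * \<bar>h\<bar>) powr (1 - b) / (1 - b))" if "x \<in> {t, t + h}" for x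
  proof -
    have "\<bar>P x\<bar> \<le> 2 * C * \<bar>h\<bar> * ((x - s) powr (1 - b) / (1 - b))"
      unfolding P_def using that s h assms(1) near
      by (intro rl_integral_minus_initial_part_bound continuous_on_subset[OF assms(2)]) auto
    also have "\<dots> \<le> 2 * C * \<bar>h\<bar> * ((3 * \<bar>h\<bar>) powr (1 - b) / (1 - b))"
      using powr_le[OF that] \<open>0 \<le> C\<close> assms(1) by (intro mult_left_mono divide_right_mono) auto
    finally show ?thesis .
  qed
  have int: "(\<lambda>\<tau>. (x - \<tau>) powr (-b) * \<rho> \<tau>) integrable_on {0..s}" if "x \<in> {t, t + h}" for x
    using that s h by (intro integrable_singular_kernel_times_continuous[OF assms(1)]
        continuous_on_subset[OF assms(2)]) auto
  have "integral {0..s} (\<lambda>\<tau>. ((t + h - \<tau>) powr (-b) - (t - \<tau>) powr (-b)) / h * \<rho> \<tau>)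
          = (integral {0..s} (\<lambda>\<tau>. (t + h - \<tau>) powr (-b) * \<rho> \<tau>)
             - integral {0..s} (\<lambda>\<tau>. (t - \<tau>) powr (-b) * \<rho> \<tau>)) / h"
    using integral_diff[OF int int, of "t + h" t] by (simp add: left_diff_distrib)
  then have "(rl_integral b \<rho> (t + h) - rl_integral b \<rho> t) / h
      - integral {0..s} (\<lambda>\<tau>. ((t + h - \<tau>) powr (-b) - (t - \<tau>) powr (-b)) / h * \<rho> \<tau>)
      = (P (t + h) - P t) / h"
    unfolding P_def by (simp add: diff_divide_distrib)
  also have "\<bar>\<dots>\<bar> \<le> (\<bar>P (t + h)\<bar> + \<bar>P t\<bar>) / \<bar>h\<bar>"
    by (simp add: abs_divide divide_right_mono)
  also have "\<dots> \<le> 4 * C * \<bar>h\<bar> * ((3 * \<bar>h\<bar>) powr (1 - b) / (1 - b)) / \<bar>h\<bar>"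
    using P_bound[of t] P_bound[of "t + h"] by (intro divide_right_mono) auto
  also have "\<dots> = 4 * C * (3 * \<bar>h\<bar>) powr (1 - b) / (1 - b)"
    using h(1) by simp
  finally show ?thesis
    unfolding s_def .
qed

lemma tendsto_truncated_difference_quotient:
  fixes \<rho> :: "real \<Rightarrow> real"
  assumes "\<tau> \<in> {0..t}" "\<rho> t = 0"
  shows "((\<lambda>h. if \<tau> \<in> {0..t - 2 * \<bar>h\<bar>} then ((t + h - \<tau>) powr (-b) - (t - \<tau>) powr (-b)) / h * \<rho> \<tau> else 0)
           \<longlongrightarrow> b * (t - \<tau>) powr (-b - 1) * (\<rho> t - \<rho> \<tau>)) (at 0)"
proof (cases "\<tau> = t")
  case True
  then show ?thesis
    using assms(2) by (simp add: tendsto_eventually eventually_at_filter)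
next
  case False
  then have r: "0 < t - \<tau>"
    using assms(1) by auto
  have "((\<lambda>h. ((t - \<tau> + h) powr (-b) - (t - \<tau>) powr (-b)) / h) \<longlongrightarrow> -b * (t - \<tau>) powr (-b - 1)) (at 0)"
    using has_real_derivative_powr[OF r, of "-b"] by (simp add: DERIV_def)
  then have "((\<lambda>h. ((t - \<tau> + h) powr (-b) - (t - \<tau>) powr (-b)) / h * \<rho> \<tau>)
               \<longlongrightarrow> -b * (t - \<tau>) powr (-b - 1) * \<rho> \<tau>) (at 0)"
    by (rule tendsto_mult[OF _ tendsto_const])
  then have "((\<lambda>h. ((t - \<tau> + h) powr (-b) - (t - \<tau>) powr (-b)) / h * \<rho> \<tau>)
               \<longlongrightarrow> b * (t - \<tau>) powr (-b - 1) * (\<rho> t - \<rho> \<tau>)) (at 0)"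
    using assms(2) by simp
  moreover have "\<forall>\<^sub>F h in at 0. ((t - \<tau> + h) powr (-b) - (t - \<tau>) powr (-b)) / h * \<rho> \<tau>
      = (if \<tau> \<in> {0..t - 2 * \<bar>h\<bar>} then ((t + h - \<tau>) powr (-b) - (t - \<tau>) powr (-b)) / h * \<rho> \<tau> else 0)"
  proof -
    have "\<forall>\<^sub>F h in at 0. h \<in> ball 0 ((t - \<tau>) / 2)"
      using eventually_at_ball[of "(t - \<tau>) / 2" 0 UNIV] r by simp
    then show ?thesis
      by eventually_elim (use assms(1) in \<open>auto simp: algebra_simps\<close>)
  qed
  ultimately show ?thesis
    by (rule Lim_transform_eventually)
qed

text \<open>Cutting the integral off at \<open>t - 2\<bar>h\<bar>\<close> keeps it away from the moving singularity at \<open>t + h\<close>, so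
  the integrands are dominated by \<open>4 b C (t - \<tau>) powr (-b)\<close> and dominated convergence applies.\<close>

lemma tendsto_truncated_difference_quotient_integral:
  fixes \<rho> :: "real \<Rightarrow> real"
  assumes "0 < b" "b < 1" "0 < t" "continuous_on {0..t} \<rho>" "\<rho> t = 0"
    and lip: "\<And>\<tau>. \<tau> \<in> {0..t} \<Longrightarrow> \<bar>\<rho> \<tau>\<bar> \<le> C * \<bar>\<tau> - t\<bar>"
  shows "((\<lambda>h. integral {0..t - 2 * \<bar>h\<bar>} (\<lambda>\<tau>. ((t + h - \<tau>) powr (-b) - (t - \<tau>) powr (-b)) / h * \<rho> \<tau>))
           \<longlongrightarrow> marchaud_integral b \<rho> t) (at 0)"
proof -
  define q where "q = (\<lambda>h \<tau>. ((t + h - \<tau>) powr (-b) - (t - \<tau>) powr (-b)) / h * \<rho> \<tau>)"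
  define D where "D = (\<lambda>h \<tau>. if \<tau> \<in> {0..t - 2 * \<bar>h\<bar>} then q h \<tau> else 0)"
  define G where "G = (\<lambda>\<tau>. 4 * b * C * (t - \<tau>) powr (-b))"
  have "0 \<le> C * t"
    using lip[of 0] assms(3) by (simp add: order_trans[OF abs_ge_zero])
  with assms(3) have "0 \<le> C"
    by (simp add: zero_le_mult_iff)
  have G_int: "G integrable_on {0..s}" if "0 \<le> s" "s \<le> t" for s
    unfolding G_def using has_integral_singular_kernel[OF assms(2) that] by (intro integrable_on_mult_right) blast
  have q_bound: "\<bar>q h \<tau>\<bar> \<le> G \<tau>" if "h \<noteq> 0" "\<tau> \<in> {0..t - 2 * \<bar>h\<bar>}" for h \<tau>
    unfolding q_def G_def using that lip[of \<tau>]
    by (intro singular_difference_quotient_bound[OF assms(1,2)]) auto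
  have D_has_integral: "(D h has_integral integral {0..t - 2 * \<bar>h\<bar>} (q h)) {0..t}"
    if h: "h \<in> ball 0 (t / 2) - {0}" for h
  proof -
    have "q h integrable_on {0..t - 2 * \<bar>h\<bar>}"
    proof (rule measurable_bounded_by_integrable_imp_integrable)
      show "q h \<in> borel_measurable (lebesgue_on {0..t - 2 * \<bar>h\<bar>})"
        unfolding q_def using h
        by (intro continuous_on_Ioo_imp_borel_measurable_Icc continuous_intros
            continuous_on_subset[OF assms(4)]) auto
      show "G integrable_on {0..t - 2 * \<bar>h\<bar>}"
        using G_int h by auto
    qed (use q_bound h in auto)
    then show ?thesis
      unfolding D_def using has_integral_restrict_closed_subinterval[of "q h" _ 0 "t - 2 * \<bar>h\<bar>" 0 t]
      by auto
  qed
  have "((\<lambda>h. integral {0..t} (D h)) \<longlongrightarrow> marchaud_integral b \<rho> t) (at 0 within ball 0 (t / 2))"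
    unfolding marchaud_integral_def
  proof (rule integral_dominated_convergence_at_within)
    show "D h integrable_on {0..t}" if "h \<in> ball 0 (t / 2) - {0}" for h
      using D_has_integral[OF that] by blast
    show "norm (D h \<tau>) \<le> G \<tau>" if "h \<in> ball 0 (t / 2) - {0}" "\<tau> \<in> {0..t}" for h \<tau>
      using q_bound[of h \<tau>] that assms(1) \<open>0 \<le> C\<close> unfolding D_def G_def by auto
    show "G integrable_on {0..t}"
      using G_int assms(3) by simp
    show "((\<lambda>h. D h \<tau>) \<longlongrightarrow> b * (t - \<tau>) powr (-b - 1) * (\<rho> t - \<rho> \<tau>)) (at 0 within ball 0 (t / 2))"
      if "\<tau> \<in> {0..t}" for \<tau>
      using tendsto_within_subset[OF tendsto_truncated_difference_quotient[where \<rho> = \<rho>, OF that assms(5)]]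
      unfolding D_def q_def by simp
  qed
  moreover have "at (0::real) within ball 0 (t / 2) = at 0"
    by (rule at_within_open) (use assms(3) in auto)
  moreover have "\<forall>\<^sub>F h in at 0. integral {0..t} (D h) = integral {0..t - 2 * \<bar>h\<bar>} (q h)"
    using eventually_at_ball'[OF half_gt_zero[OF assms(3)], of 0 UNIV]
    by eventually_elim (simp add: integral_unique[OF D_has_integral])
  ultimately show ?thesis
    unfolding q_def by (auto elim: Lim_transform_eventually)
qed

lemma rl_integral_has_real_derivative_vanishing:
  fixes \<rho> :: "real \<Rightarrow> real"
  assumes "0 < b" "b < 1" "0 < t" "t < T" "continuous_on {0..T} \<rho>" "\<rho> t = 0"
    and lip: "\<And>\<tau>. \<tau> \<in> {0..T} \<Longrightarrow> \<bar>\<rho> \<tau>\<bar> \<le> C * \<bar>\<tau> - t\<bar>"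
  shows "(rl_integral b \<rho> has_real_derivative marchaud_integral b \<rho> t) (at t)"
proof -
  define Q where "Q = (\<lambda>h. integral {0..t - 2 * \<bar>h\<bar>} (\<lambda>\<tau>. ((t + h - \<tau>) powr (-b) - (t - \<tau>) powr (-b)) / h * \<rho> \<tau>))"
  have "\<bar>\<rho> \<tau>\<bar> \<le> C * \<bar>\<tau> - t\<bar>" if "\<tau> \<in> {0..t}" for \<tau>
    using that assms(4) by (intro lip) auto
  moreover have "continuous_on {0..t} \<rho>"
    using assms(4) by (intro continuous_on_subset[OF assms(5)]) auto
  ultimately have "(Q \<longlongrightarrow> marchaud_integral b \<rho> t) (at 0)"
    unfolding Q_def by (intro tendsto_truncated_difference_quotient_integral[where \<rho> = \<rho>, OF assms(1-3) _ assms(6)])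
  moreover have "((\<lambda>h. (rl_integral b \<rho> (t + h) - rl_integral b \<rho> t) / h - Q h) \<longlongrightarrow> 0) (at 0)"
  proof (rule Lim_null_comparison)
    define \<delta> where "\<delta> = min (t / 2) (T - t)"
    have "0 < \<delta>"
      using assms(3,4) unfolding \<delta>_def by auto
    show "\<forall>\<^sub>F h in at 0. norm ((rl_integral b \<rho> (t + h) - rl_integral b \<rho> t) / h - Q h)
            \<le> 4 * C * (3 * \<bar>h\<bar>) powr (1 - b) / (1 - b)"
      using eventually_at_ball'[OF \<open>0 < \<delta>\<close>, of 0 UNIV]
      by eventually_elim
         (use rl_integral_difference_quotient_remainder[OF assms(2,5) lip] in \<open>auto simp: Q_def \<delta>_def\<close>)
    have "((\<lambda>h. 3 * \<bar>h\<bar>) \<longlongrightarrow> 0) (at (0::real))"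
      by (intro tendsto_mult_right_zero tendsto_rabs_zero tendsto_ident_at)
    then have "((\<lambda>h. (3 * \<bar>h\<bar>) powr (1 - b)) \<longlongrightarrow> 0) (at 0)"
      by (rule tendsto_zero_powrI[where b = "1 - b"]) (use assms(2) in auto)
    then show "((\<lambda>h. 4 * C * (3 * \<bar>h\<bar>) powr (1 - b) / (1 - b)) \<longlongrightarrow> 0) (at 0)"
      by (intro tendsto_divide_zero tendsto_mult_right_zero)
  qed
  ultimately have "((\<lambda>h. (rl_integral b \<rho> (t + h) - rl_integral b \<rho> t) / h) \<longlongrightarrow> marchaud_integral b \<rho> t) (at 0)"
    using tendsto_add by fastforce
  then show ?thesis
    unfolding DERIV_def .
qed

lemma rl_integral_has_real_derivative:
  fixes \<phi> :: "real \<Rightarrow> real"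
  assumes "0 < b" "b < 1" "0 < t" "t < T" "continuous_on {0..T} \<phi>" "(\<phi> has_real_derivative d) (at t)"
  shows "(rl_integral b \<phi> has_real_derivative t powr (-b) * \<phi> t + marchaud_integral b \<phi> t) (at t)"
proof -
  obtain C where lip: "\<And>\<tau>. \<tau> \<in> {0..T} \<Longrightarrow> \<bar>\<phi> \<tau> - \<phi> t\<bar> \<le> C * \<bar>\<tau> - t\<bar>"
    using has_real_derivative_imp_pointwise_lipschitz[OF compact_Icc assms(5) _ assms(6)] assms(3,4)
    by auto
  define \<rho> where "\<rho> = (\<lambda>\<tau>. \<phi> \<tau> - \<phi> t)"
  have "continuous_on {0..T} \<rho>"
    unfolding \<rho>_def by (intro continuous_intros assms(5))
  from rl_integral_has_real_derivative_vanishing[OF assms(1-4) this, of C] lip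
  have "(rl_integral b \<rho> has_real_derivative marchaud_integral b \<phi> t) (at t)"
    unfolding \<rho>_def by (simp add: marchaud_integral_diff_const)
  moreover have "((\<lambda>x. \<phi> t * (x powr (1 - b) / (1 - b))) has_real_derivative \<phi> t * t powr (-b)) (at t)"
    using DERIV_cmult[OF DERIV_cdivide[OF has_real_derivative_powr[OF assms(3), of "1 - b"]], of "\<phi> t" "1 - b"]
      assms(2) by simp
  ultimately have "((\<lambda>x. \<phi> t * (x powr (1 - b) / (1 - b)) + rl_integral b \<rho> x) has_real_derivative
      t powr (-b) * \<phi> t + marchaud_integral b \<phi> t) (at t)"
    using DERIV_add by (fastforce simp: mult.commute)
  then show ?thesis
  proof (rule has_field_derivative_transform_within_open)
    fix x :: real assume x: "x \<in> {0<..<T}"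
    have kernel: "((\<lambda>\<tau>. (x - \<tau>) powr (-b)) has_integral x powr (1 - b) / (1 - b)) {0..x}"
      using has_integral_singular_kernel[OF assms(2), of 0 x x] x by simp
    have int_rho: "(\<lambda>\<tau>. (x - \<tau>) powr (-b) * \<rho> \<tau>) integrable_on {0..x}"
      using x unfolding \<rho>_def
      by (intro integrable_singular_kernel_times_continuous[OF assms(2)] continuous_intros
          continuous_on_subset[OF assms(5)]) auto
    have "rl_integral b \<phi> x
        = integral {0..x} (\<lambda>\<tau>. \<phi> t * (x - \<tau>) powr (-b) + (x - \<tau>) powr (-b) * \<rho> \<tau>)"
      unfolding rl_integral_def \<rho>_def by (intro integral_cong) (simp add: algebra_simps)
    also have "\<dots> = \<phi> t * (x powr (1 - b) / (1 - b)) + rl_integral b \<rho> x"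
      unfolding rl_integral_def
      by (intro integral_unique has_integral_add has_integral_mult_right kernel integrable_integral int_rho)
    finally show "\<phi> t * (x powr (1 - b) / (1 - b)) + rl_integral b \<rho> x = rl_integral b \<phi> x"
      by simp
  qed (use assms(3,4) in auto)
qed

lemma has_integral_rl_integral_derivative:
  fixes \<phi> :: "real \<Rightarrow> real"
  assumes "0 < b" "b < 1" "0 \<le> T" "continuous_on {0..T} \<phi>"
    and "\<And>t. t \<in> {0<..<T} \<Longrightarrow> \<phi> differentiable (at t)"
  shows "((\<lambda>t. t powr (-b) * \<phi> t + marchaud_integral b \<phi> t) has_integral rl_integral b \<phi> T) {0..T}"
proof -
  have "((\<lambda>t. t powr (-b) * \<phi> t + marchaud_integral b \<phi> t) has_integral rl_integral b \<phi> T - rl_integral b \<phi> 0) {0..T}"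
  proof (rule fundamental_theorem_of_calculus_interior[OF assms(3)])
    show "continuous_on {0..T} (rl_integral b \<phi>)"
      by (rule continuous_on_rl_integral[OF assms(1,2,4)])
    fix t assume t: "t \<in> {0<..<T}"
    then obtain d where "(\<phi> has_real_derivative d) (at t)"
      using assms(5) real_differentiable_def by blast
    with t show "(rl_integral b \<phi> has_vector_derivative t powr (-b) * \<phi> t + marchaud_integral b \<phi> t) (at t)"
      using rl_integral_has_real_derivative[OF assms(1,2) _ _ assms(4)]
      by (auto simp: has_real_derivative_iff_has_vector_derivative)
  qed
  then show ?thesis
    by (simp add: rl_integral_def)
qed

subsection \<open>Pairing the Caputo integral with the solution\<close>

lemma has_real_derivative_inner:
  fixes v w :: "real \<Rightarrow> 'a::real_inner"
  assumes "(v has_vector_derivative v') (at t)" "(w has_vector_derivative w') (at t)"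
  shows "((\<lambda>\<tau>. inner (v \<tau>) (w \<tau>)) has_real_derivative inner v' (w t) + inner (v t) w') (at t)"
  using has_derivative_inner[OF assms[unfolded has_vector_derivative_def]]
  unfolding has_field_derivative_def
  by (rule has_derivative_eq_rhs) (auto simp: algebra_simps fun_eq_iff)

lemma has_integral_inner_left:
  fixes f :: "'n::euclidean_space \<Rightarrow> 'a::real_inner"
  assumes "(f has_integral i) S"
  shows "((\<lambda>x. inner (f x) e) has_integral inner i e) S"
  using has_integral_linear[OF assms bounded_linear_inner_left[of e]] by (simp add: o_def)

lemma half_norm_diff_le_inner_diff:
  fixes x y :: "'a::real_inner"
  shows "((norm x)\<^sup>2 - (norm y)\<^sup>2) / 2 \<le> inner x x - inner y x"
proof -
  have "0 \<le> (norm (x - y))\<^sup>2 / 2"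
    by simp
  also have "(norm (x - y))\<^sup>2 / 2 = inner x x - inner y x - ((norm x)\<^sup>2 - (norm y)\<^sup>2) / 2"
    by (simp add: power2_norm_eq_inner inner_diff_left inner_diff_right inner_commute field_simps)
  finally show ?thesis
    by simp
qed

lemma inner_caputo_integral_eq_marchaud:
  fixes u u' :: "real \<Rightarrow> 'a::real_inner"
  assumes "b < 1" "0 < t" "continuous_on {0..t} u"
    and der: "\<And>\<tau>. \<tau> \<in> {0<..t} \<Longrightarrow> (u has_vector_derivative u' \<tau>) (at \<tau>)"
    and int: "(\<lambda>\<tau>. (t - \<tau>) powr (-b) *\<^sub>R u' \<tau>) integrable_on {0..t}"
  shows "inner (integral {0..t} (\<lambda>\<tau>. (t - \<tau>) powr (-b) *\<^sub>R u' \<tau>)) e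
           = t powr (-b) * (inner (u t) e - inner (u 0) e) + marchaud_integral b (\<lambda>\<tau>. inner (u \<tau>) e) t"
proof -
  define \<zeta> where "\<zeta> = (\<lambda>\<tau>. inner (u \<tau>) e)"
  have cont: "continuous_on {0..t} \<zeta>"
    unfolding \<zeta>_def by (intro continuous_intros assms(3))
  have \<zeta>_der: "(\<zeta> has_real_derivative inner (u' \<tau>) e) (at \<tau>)" if "\<tau> \<in> {0<..t}" for \<tau>
    using has_real_derivative_inner[OF der[OF that] has_vector_derivative_const] unfolding \<zeta>_def by simp
  obtain C where lip: "\<And>\<tau>. \<tau> \<in> {0..t} \<Longrightarrow> \<bar>\<zeta> \<tau> - \<zeta> t\<bar> \<le> C * \<bar>\<tau> - t\<bar>"
    using has_real_derivative_imp_pointwise_lipschitz[OF compact_Icc cont _ \<zeta>_der[of t]] assms(2) by auto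
  have "((\<lambda>\<tau>. (t - \<tau>) powr (-b) * inner (u' \<tau>) e) has_integral
         inner (integral {0..t} (\<lambda>\<tau>. (t - \<tau>) powr (-b) *\<^sub>R u' \<tau>)) e) {0..t}"
    using has_integral_inner_left[OF integrable_integral[OF int], of e] by simp
  with caputo_integral_eq_marchaud[OF assms(1,2) cont lip \<zeta>_der] show ?thesis
    unfolding \<zeta>_def by (auto simp: integral_unique)
qed

text \<open>Alikhanov's inequality \<open>\<langle>D\<^sub>t\<^sup>\<beta> u, u\<rangle> \<ge> D\<^sub>t\<^sup>\<beta> \<parallel>u\<parallel>\<^sup>2 / 2\<close>, in Marchaud form.\<close>

lemma caputo_inner_lower_bound:
  fixes u u' :: "real \<Rightarrow> 'a::real_inner"
  assumes "0 < b" "b < 1" "0 < t" "continuous_on {0..t} u"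
    and der: "\<And>\<tau>. \<tau> \<in> {0<..t} \<Longrightarrow> (u has_vector_derivative u' \<tau>) (at \<tau>)"
    and int: "(\<lambda>\<tau>. (t - \<tau>) powr (-b) *\<^sub>R u' \<tau>) integrable_on {0..t}"
  shows "t powr (-b) * ((norm (u t))\<^sup>2 - inner (u 0) (u t)) + marchaud_integral b (\<lambda>\<tau>. (norm (u \<tau>))\<^sup>2) t / 2
           \<le> inner (integral {0..t} (\<lambda>\<tau>. (t - \<tau>) powr (-b) *\<^sub>R u' \<tau>)) (u t)"
proof -
  define \<zeta> where "\<zeta> = (\<lambda>\<tau>. inner (u \<tau>) (u t))"
  define \<phi> where "\<phi> = (\<lambda>\<tau>. (norm (u \<tau>))\<^sup>2)"
  have cont_\<zeta>: "continuous_on {0..t} \<zeta>" and cont_\<phi>: "continuous_on {0..t} \<phi>"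
    unfolding \<zeta>_def \<phi>_def by (intro continuous_intros assms(4))+
  have \<zeta>_der: "(\<zeta> has_real_derivative inner (u' t) (u t)) (at t)"
    using has_real_derivative_inner[OF der has_vector_derivative_const, of t] assms(3)
    unfolding \<zeta>_def by simp
  obtain C\<zeta> where lip_\<zeta>: "\<And>\<tau>. \<tau> \<in> {0..t} \<Longrightarrow> \<bar>\<zeta> \<tau> - \<zeta> t\<bar> \<le> C\<zeta> * \<bar>\<tau> - t\<bar>"
    using has_real_derivative_imp_pointwise_lipschitz[OF compact_Icc cont_\<zeta> _ \<zeta>_der] assms(3) by auto
  have \<phi>_der: "(\<phi> has_real_derivative 2 * inner (u' t) (u t)) (at t)"
    using has_real_derivative_inner[OF der der, of t] assms(3)
    unfolding \<phi>_def power2_norm_eq_inner by (simp add: inner_commute)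
  obtain C\<phi> where lip_\<phi>: "\<And>\<tau>. \<tau> \<in> {0..t} \<Longrightarrow> \<bar>\<phi> \<tau> - \<phi> t\<bar> \<le> C\<phi> * \<bar>\<tau> - t\<bar>"
    using has_real_derivative_imp_pointwise_lipschitz[OF compact_Icc cont_\<phi> _ \<phi>_der] assms(3) by auto
  have "marchaud_integral b \<phi> t / 2 \<le> marchaud_integral b \<zeta> t"
    unfolding marchaud_integral_def integral_divide[symmetric]
  proof (rule integral_le)
    show "(\<lambda>\<tau>. b * (t - \<tau>) powr (-b - 1) * (\<phi> t - \<phi> \<tau>) / 2) integrable_on {0..t}"
      using integrable_marchaud_integrand[OF assms(2) _ cont_\<phi> lip_\<phi>] assms(3) by simp
    show "(\<lambda>\<tau>. b * (t - \<tau>) powr (-b - 1) * (\<zeta> t - \<zeta> \<tau>)) integrable_on {0..t}"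
      using integrable_marchaud_integrand[OF assms(2) _ cont_\<zeta> lip_\<zeta>] assms(3) by simp
    fix \<tau>
    have "(\<phi> t - \<phi> \<tau>) / 2 \<le> \<zeta> t - \<zeta> \<tau>"
      unfolding \<phi>_def \<zeta>_def using half_norm_diff_le_inner_diff[of "u t" "u \<tau>"] by simp
    then show "b * (t - \<tau>) powr (-b - 1) * (\<phi> t - \<phi> \<tau>) / 2 \<le> b * (t - \<tau>) powr (-b - 1) * (\<zeta> t - \<zeta> \<tau>)"
      using mult_left_mono[of _ _ "b * (t - \<tau>) powr (-b - 1)"] assms(1) by fastforce
  qed
  moreover have "inner (u t) (u t) = (norm (u t))\<^sup>2"
    by (simp add: power2_norm_eq_inner)
  ultimately show ?thesis
    using inner_caputo_integral_eq_marchaud[OF assms(2-4) der int, of "u t"]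
    unfolding \<phi>_def \<zeta>_def by simp
qed

lemma has_integral_marchaud_energy:
  fixes u :: "real \<Rightarrow> 'a::real_inner"
  assumes "0 < b" "b < 1" "0 \<le> T" "continuous_on {0..T} u" "\<And>t. t \<in> {0<..<T} \<Longrightarrow> u differentiable (at t)"
  shows "((\<lambda>t. t powr (-b) * ((norm (u t))\<^sup>2 - inner (u 0) (u t)) + marchaud_integral b (\<lambda>\<tau>. (norm (u \<tau>))\<^sup>2) t / 2)
           has_integral integral {0..T} (\<lambda>t. ((T - t) powr (-b) + t powr (-b)) * (norm (u t))\<^sup>2) / 2
                        - integral {0..T} (\<lambda>t. t powr (-b) * inner (u 0) (u t))) {0..T}"
proof -
  define \<phi> where "\<phi> = (\<lambda>t. (norm (u t))\<^sup>2)"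
  have cont_\<phi>: "continuous_on {0..T} \<phi>"
    unfolding \<phi>_def by (intro continuous_intros assms(4))
  have "\<phi> differentiable (at t)" if "t \<in> {0<..<T}" for t
    unfolding \<phi>_def power2_norm_eq_inner using differentiable_inner[OF assms(5) assms(5), OF that that] .
  from has_integral_rl_integral_derivative[OF assms(1-3) cont_\<phi> this]
  have marchaud: "((\<lambda>t. t powr (-b) * \<phi> t + marchaud_integral b \<phi> t) has_integral rl_integral b \<phi> T) {0..T}" .
  have J: "((\<lambda>t. (T - t) powr (-b) * \<phi> t) has_integral rl_integral b \<phi> T) {0..T}"
    unfolding rl_integral_def
    by (intro integrable_integral integrable_singular_kernel_times_continuous[OF assms(2) cont_\<phi> assms(3)]) simp
  have K_\<phi>: "((\<lambda>t. t powr (-b) * \<phi> t) has_integral integral {0..T} (\<lambda>t. t powr (-b) * \<phi> t)) {0..T}"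
    by (intro integrable_integral integrable_powr_times_continuous[OF assms(2) cont_\<phi>])
  have K_\<psi>: "((\<lambda>t. t powr (-b) * inner (u 0) (u t)) has_integral integral {0..T} (\<lambda>t. t powr (-b) * inner (u 0) (u t))) {0..T}"
    by (intro integrable_integral integrable_powr_times_continuous[OF assms(2)] continuous_intros assms(4))
  have "((\<lambda>t. ((T - t) powr (-b) + t powr (-b)) * \<phi> t) has_integral rl_integral b \<phi> T + integral {0..T} (\<lambda>t. t powr (-b) * \<phi> t)) {0..T}"
    using has_integral_add[OF J K_\<phi>] by (simp add: algebra_simps)
  then have "integral {0..T} (\<lambda>t. ((T - t) powr (-b) + t powr (-b)) * \<phi> t) = rl_integral b \<phi> T + integral {0..T} (\<lambda>t. t powr (-b) * \<phi> t)"
    by (rule integral_unique)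
  moreover have "((\<lambda>t. (t powr (-b) * \<phi> t + (t powr (-b) * \<phi> t + marchaud_integral b \<phi> t)) / 2 - t powr (-b) * inner (u 0) (u t))
      has_integral (integral {0..T} (\<lambda>t. t powr (-b) * \<phi> t) + rl_integral b \<phi> T) / 2 - integral {0..T} (\<lambda>t. t powr (-b) * inner (u 0) (u t))) {0..T}"
    by (intro has_integral_diff has_integral_divide has_integral_add K_\<phi> K_\<psi> marchaud)
  ultimately show ?thesis
    unfolding \<phi>_def by (simp add: algebra_simps add_divide_distrib)
qed

subsection \<open>Measurability\<close>

lemma measurable_on_inner_floor_indexed:
  fixes w :: "real \<Rightarrow> 'a::real_inner" and c :: "nat \<Rightarrow> 'a"
  assumes "continuous_on {0..T} w"
  shows "(\<lambda>t. inner (w t) (c (nat \<lfloor>N * t\<rfloor>))) measurable_on {0..T}"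
proof -
  have "(\<lambda>t. inner (w t) (c k)) \<in> borel_measurable (lebesgue_on {0..T})" for k
    by (intro continuous_imp_measurable_on_sets_lebesgue continuous_intros assms) auto
  moreover have "(\<lambda>t. nat \<lfloor>N * t\<rfloor>) \<in> measurable (lebesgue_on {0..T}) (count_space UNIV)"
  proof -
    have "(\<lambda>t. N * t) \<in> borel_measurable (lebesgue_on {0..T})"
      by (intro continuous_imp_measurable_on_sets_lebesgue continuous_intros) auto
    from measurable_comp[OF measurable_comp[OF this measurable_real_floor], of nat "count_space UNIV"]
    show ?thesis
      by (simp add: o_def)
  qed
  ultimately have "(\<lambda>t. inner (w t) (c (nat \<lfloor>N * t\<rfloor>))) \<in> borel_measurable (lebesgue_on {0..T})"
    by (rule measurable_compose_countable'[where f = "\<lambda>k t. inner (w t) (c k)"]) auto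
  then show ?thesis
    by (simp add: measurable_on_iff_borel_measurable)
qed

lemma tendsto_grid_approximation:
  fixes u :: "real \<Rightarrow> 'a::metric_space" and X :: "nat \<Rightarrow> nat \<Rightarrow> 'a"
  assumes cont: "continuous_on {0..T} u" and t: "t \<in> {0<..<T}"
    and X: "\<And>n k. dist (X n k) (u (real k / real (Suc n))) < 1 / real (Suc n)"
  shows "(\<lambda>n. X n (nat \<lfloor>real (Suc n) * t\<rfloor>)) \<longlonglongrightarrow> u t"
proof -
  define N where "N = (\<lambda>n::nat. real (Suc n))"
  define s where "s = (\<lambda>n. real (nat \<lfloor>N n * t\<rfloor>) / N n)"
  have s: "s n \<in> {0..T}" "\<bar>s n - t\<bar> \<le> 1 / N n" for n
  proof -
    have "real_of_int \<lfloor>N n * t\<rfloor> \<le> N n * t" "N n * t < real_of_int \<lfloor>N n * t\<rfloor> + 1" "0 \<le> \<lfloor>N n * t\<rfloor>"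
      using t by (auto simp: N_def)
    then have "s n \<le> t" "t < s n + 1 / N n" "0 \<le> s n"
      unfolding s_def by (auto simp: N_def field_simps)
    then show "s n \<in> {0..T}" "\<bar>s n - t\<bar> \<le> 1 / N n"
      using t by auto
  qed
  have inv_N: "(\<lambda>n. 1 / N n) \<longlonglongrightarrow> 0"
    unfolding N_def using LIMSEQ_inverse_real_of_nat by (simp add: inverse_eq_divide)
  have "(\<lambda>n. s n - t) \<longlonglongrightarrow> 0"
    by (rule Lim_null_comparison[OF _ inv_N]) (use s(2) in \<open>simp add: always_eventually\<close>)
  then have "(\<lambda>n. u (s n)) \<longlonglongrightarrow> u t"
  proof (rule continuous_on_tendsto_compose[OF cont LIM_zero_cancel])
    show "\<forall>\<^sub>F n in sequentially. s n \<in> {0..T}"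
      using s(1) by (simp add: always_eventually)
  qed (use t in auto)
  then have "(\<lambda>n. dist (u (s n)) (u t)) \<longlonglongrightarrow> 0"
    by (rule tendsto_dist_iff[THEN iffD1])
  then have lim: "(\<lambda>n. 1 / N n + dist (u (s n)) (u t)) \<longlonglongrightarrow> 0"
    by (rule tendsto_add_zero[OF inv_N])
  have "dist (X n (nat \<lfloor>N n * t\<rfloor>)) (u t) \<le> 1 / N n + dist (u (s n)) (u t)" for n
    using dist_triangle[of "X n (nat \<lfloor>N n * t\<rfloor>)" "u t" "u (s n)"] X[of n "nat \<lfloor>N n * t\<rfloor>"]
    unfolding s_def N_def by linarith
  then have "\<forall>\<^sub>F n in sequentially. norm (dist (X n (nat \<lfloor>N n * t\<rfloor>)) (u t)) \<le> 1 / N n + dist (u (s n)) (u t)"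
    by (simp add: always_eventually)
  from Lim_null_comparison[OF this lim] show ?thesis
    unfolding N_def by (rule tendsto_dist_iff[THEN iffD2])
qed

text \<open>On a grid of mesh \<open>1 / (n + 1)\<close>, approximate \<open>u\<close> by points \<open>X n k\<close> of the dense domain; symmetry
  moves \<open>A\<close> onto the fixed vector \<open>u t\<close>, so \<open>\<langle>u t, A (X n k)\<rangle> \<rightarrow> \<langle>u t, A (u t)\<rangle>\<close>.\<close>

lemma measurable_on_inner_symmetric_operator:
  fixes A :: "'a::real_inner \<Rightarrow> 'a" and u :: "real \<Rightarrow> 'a"
  assumes dense: "closure DA = UNIV" and sym: "\<And>x y. x \<in> DA \<Longrightarrow> y \<in> DA \<Longrightarrow> inner (A x) y = inner x (A y)"
    and cont: "continuous_on {0..T} u" and dom: "\<And>t. t \<in> {0<..<T} \<Longrightarrow> u t \<in> DA"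
  shows "(\<lambda>t. inner (A (u t)) (u t)) measurable_on {0..T}"
proof -
  have approx: "\<exists>x\<in>DA. dist x y < e" if "0 < e" for y e
    using closure_approachable[of y DA] dense that by auto
  have "\<exists>x. x \<in> DA \<and> dist x (u (real k / real (Suc n))) < 1 / real (Suc n)" for n k
    using approx[of "1 / real (Suc n)" "u (real k / real (Suc n))"] by auto
  then have "\<exists>X. \<forall>n k. X n k \<in> DA \<and> dist (X n k) (u (real k / real (Suc n))) < 1 / real (Suc n)"
    by (intro choice allI)
  then obtain X where X: "\<And>n k. X n k \<in> DA" "\<And>n k. dist (X n k) (u (real k / real (Suc n))) < 1 / real (Suc n)"
    by blast
  show ?thesis
  proof (rule measurable_on_limit[of "\<lambda>n t. inner (u t) (A (X n (nat \<lfloor>real (Suc n) * t\<rfloor>)))" _ "{0, T}"])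
    show "(\<lambda>t. inner (u t) (A (X n (nat \<lfloor>real (Suc n) * t\<rfloor>)))) measurable_on {0..T}" for n
      by (rule measurable_on_inner_floor_indexed[OF cont])
    fix t assume "t \<in> {0..T} - {0, T}"
    then have t: "t \<in> {0<..<T}"
      by auto
    have "(\<lambda>n. inner (X n (nat \<lfloor>real (Suc n) * t\<rfloor>)) (A (u t))) \<longlonglongrightarrow> inner (u t) (A (u t))"
      by (intro tendsto_intros tendsto_grid_approximation[OF cont t X(2)])
    moreover have "inner (u t) (A (X n (nat \<lfloor>real (Suc n) * t\<rfloor>)))
                     = inner (X n (nat \<lfloor>real (Suc n) * t\<rfloor>)) (A (u t))" for n
      by (simp only: inner_commute[of "u t"] sym[OF X(1) dom[OF t]])
    moreover have "inner (A (u t)) (u t) = inner (u t) (A (u t))"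
      by (rule inner_commute)
    ultimately show "(\<lambda>n. inner (u t) (A (X n (nat \<lfloor>real (Suc n) * t\<rfloor>)))) \<longlonglongrightarrow> inner (A (u t)) (u t)"
      by (simp only:)
  qed auto
qed

lemma rl_integral_inner_has_real_derivative_caputo:
  fixes u u' v :: "real \<Rightarrow> 'a::real_inner"
  assumes "0 < b" "b < 1" "0 < t" "t < T" and cont: "continuous_on {0..T} u"
    and der: "\<And>\<tau>. \<tau> \<in> {0<..<T} \<Longrightarrow> (u has_vector_derivative u' \<tau>) (at \<tau>)"
    and int: "(\<lambda>\<tau>. (t - \<tau>) powr (-b) *\<^sub>R u' \<tau>) integrable_on {0..t}"
    and v_cont: "continuous_on {0..S} v" "T \<le> S" and v_eq: "\<And>\<tau>. \<tau> \<in> {0..T} \<Longrightarrow> v \<tau> = u \<tau>"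
  shows "(rl_integral b (\<lambda>\<tau>. inner (v \<tau>) (u t)) has_real_derivative
           inner (integral {0..t} (\<lambda>\<tau>. (t - \<tau>) powr (-b) *\<^sub>R u' \<tau>)) (u t) + t powr (-b) * inner (u 0) (u t))
         (at t)"
proof -
  define \<zeta> where "\<zeta> = (\<lambda>\<tau>. inner (v \<tau>) (u t))"
  have \<zeta>_der: "(\<zeta> has_real_derivative inner (u' t) (u t)) (at t)"
  proof (rule has_field_derivative_transform_within_open)
    show "((\<lambda>\<tau>. inner (u \<tau>) (u t)) has_real_derivative inner (u' t) (u t)) (at t)"
      using has_real_derivative_inner[OF der has_vector_derivative_const, of t] assms(3,4) by simp
    show "inner (u \<tau>) (u t) = \<zeta> \<tau>" if "\<tau> \<in> {0<..<T}" for \<tau>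
      unfolding \<zeta>_def using that v_eq by simp
  qed (use assms(3,4) in auto)
  have "continuous_on {0..S} \<zeta>"
    unfolding \<zeta>_def by (intro continuous_intros v_cont)
  from rl_integral_has_real_derivative[OF assms(1-3) _ this \<zeta>_der] assms(4) v_cont(2)
  have "(rl_integral b \<zeta> has_real_derivative t powr (-b) * \<zeta> t + marchaud_integral b \<zeta> t) (at t)"
    by simp
  moreover have "marchaud_integral b \<zeta> t = marchaud_integral b (\<lambda>\<tau>. inner (u \<tau>) (u t)) t"
    unfolding marchaud_integral_def \<zeta>_def using assms(4) by (intro integral_cong) (simp add: v_eq)
  moreover have "\<zeta> t = inner (u t) (u t)"
    unfolding \<zeta>_def using assms(3,4) by (simp add: v_eq)
  moreover have "continuous_on {0..t} u"
    using assms(4) by (intro continuous_on_subset[OF cont]) auto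
  ultimately show ?thesis
    using inner_caputo_integral_eq_marchaud[OF assms(2,3) _ der int, of "u t"] assms(4)
    unfolding \<zeta>_def by (simp add: algebra_simps)
qed

text \<open>Up to the continuous term \<open>t powr (-b) * \<langle>u 0, u t\<rangle>\<close>, the paired Caputo integral is the limit of
  difference quotients of \<open>rl_integral b (\<lambda>\<tau>. \<langle>v \<tau>, u t\<rangle>)\<close> at \<open>t\<close>, which are continuous in \<open>t\<close>; \<open>v\<close>
  extends \<open>u\<close> continuously beyond \<open>T\<close> so that the quotients are defined up to \<open>t = T\<close>.\<close>

lemma measurable_on_inner_caputo_integral:
  fixes u u' :: "real \<Rightarrow> 'a::real_inner"
  assumes "0 < b" "b < 1" "0 < T" and cont: "continuous_on {0..T} u"
    and der: "\<And>t. t \<in> {0<..<T} \<Longrightarrow> (u has_vector_derivative u' t) (at t)"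
    and int: "\<And>t. t \<in> {0<..<T} \<Longrightarrow> (\<lambda>\<tau>. (t - \<tau>) powr (-b) *\<^sub>R u' \<tau>) integrable_on {0..t}"
  shows "(\<lambda>t. inner (integral {0..t} (\<lambda>\<tau>. (t - \<tau>) powr (-b) *\<^sub>R u' \<tau>)) (u t)) measurable_on {0..T}"
proof -
  define v where "v = (\<lambda>\<tau>. u (max 0 (min T \<tau>)))"
  have v_cont: "continuous_on {0..T + 1} v"
    unfolding v_def using assms(3) by (intro continuous_on_compose2[OF cont] continuous_intros) auto
  define B where "B = (\<lambda>x t. rl_integral b (\<lambda>\<tau>. inner (v \<tau>) (u t)) x)"
  define g where "g = (\<lambda>(n::nat) t. (B (t + 1 / Suc n) t - B (t + 0) t) / (1 / Suc n) - t powr (-b) * inner (u 0) (u t))"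
  show ?thesis
  proof (rule measurable_on_limit[of g _ "{0, T}"])
    have B_cont: "continuous_on {0..T} (\<lambda>t. B (t + e) t)" if "0 \<le> e" "e \<le> 1" for e
      unfolding B_def using that by (intro continuous_on_rl_integral_inner_shifted[OF assms(1,2) v_cont cont]) auto
    have "continuous_on {0<..<T} (g n)" for n
      unfolding g_def
      by (intro continuous_intros continuous_on_subset[OF B_cont] continuous_on_subset[OF cont]) auto
    then show "g n measurable_on {0..T}" for n
      by (simp add: continuous_on_Ioo_imp_borel_measurable_Icc measurable_on_iff_borel_measurable)
    fix t assume "t \<in> {0..T} - {0, T}"
    then have t: "0 < t" "t < T"
      by auto
    have "((\<lambda>h. (B (t + h) t - B t t) / h) \<longlongrightarrow>
        inner (integral {0..t} (\<lambda>\<tau>. (t - \<tau>) powr (-b) *\<^sub>R u' \<tau>)) (u t) + t powr (-b) * inner (u 0) (u t)) (at 0)"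
      using rl_integral_inner_has_real_derivative_caputo[OF assms(1,2) t cont der int v_cont] t
      unfolding B_def DERIV_def v_def by simp
    moreover have "(\<lambda>n. 1 / real (Suc n)) \<longlonglongrightarrow> 0"
      using LIMSEQ_inverse_real_of_nat by (simp add: inverse_eq_divide)
    then have "filterlim (\<lambda>n. 1 / real (Suc n)) (at 0) sequentially"
      by (rule filterlim_atI) simp
    ultimately have "(\<lambda>n. (B (t + 1 / Suc n) t - B t t) / (1 / Suc n)) \<longlonglongrightarrow>
        inner (integral {0..t} (\<lambda>\<tau>. (t - \<tau>) powr (-b) *\<^sub>R u' \<tau>)) (u t) + t powr (-b) * inner (u 0) (u t)"
      by (rule filterlim_compose)
    from tendsto_diff[OF this tendsto_const[of "t powr (-b) * inner (u 0) (u t)"]]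
    show "(\<lambda>n. g n t) \<longlonglongrightarrow> inner (integral {0..t} (\<lambda>\<tau>. (t - \<tau>) powr (-b) *\<^sub>R u' \<tau>)) (u t)"
      unfolding g_def by simp
  qed auto
qed

subsection \<open>The energy inequality\<close>

lemma caputo_energy_inequality:
  fixes u u' :: "real \<Rightarrow> 'a::real_inner" and a F :: "real \<Rightarrow> real"
  assumes "0 < b" "b < 1" "0 < T" "0 \<le> c" and cont: "continuous_on {0..T} u"
    and der: "\<And>t. t \<in> {0<..<T} \<Longrightarrow> (u has_vector_derivative u' t) (at t)"
    and int: "\<And>t. t \<in> {0<..<T} \<Longrightarrow> (\<lambda>\<tau>. (t - \<tau>) powr (-b) *\<^sub>R u' \<tau>) integrable_on {0..t}"
    and eq: "\<And>t. t \<in> {0<..<T} \<Longrightarrow>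
               F t = c * inner (integral {0..t} (\<lambda>\<tau>. (t - \<tau>) powr (-b) *\<^sub>R u' \<tau>)) (u t) + a t"
    and nonneg: "\<And>t. t \<in> {0<..<T} \<Longrightarrow> 0 \<le> a t"
    and a_meas: "a measurable_on {0..T}"
    and F_bound: "\<And>t. t \<in> {0..T} \<Longrightarrow> \<bar>F t\<bar> \<le> M"
  shows "\<exists>I1 I2 I3 I4.
     ((\<lambda>t. c * ((T - t) powr (-b) + t powr (-b)) * (norm (u t))\<^sup>2) has_integral I1) {0..T} \<and>
     (a has_integral I2) {0..T} \<and> (F has_integral I3) {0..T} \<and>
     ((\<lambda>t. t powr (-b) * inner (u 0) (u t)) has_integral I4) {0..T} \<and>
     I1 / 2 + I2 \<le> I3 + c * I4"
proof -
  define m where "m t = inner (integral {0..t} (\<lambda>\<tau>. (t - \<tau>) powr (-b) *\<^sub>R u' \<tau>)) (u t)" for t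
  define w where "w t = t powr (-b) * ((norm (u t))\<^sup>2 - inner (u 0) (u t))
                         + marchaud_integral b (\<lambda>\<tau>. (norm (u \<tau>))\<^sup>2) t / 2" for t
  define W where "W = integral {0..T} (\<lambda>t. ((T - t) powr (-b) + t powr (-b)) * (norm (u t))\<^sup>2)"
  define K where "K = integral {0..T} (\<lambda>t. t powr (-b) * inner (u 0) (u t))"
  have "u differentiable (at t)" if "t \<in> {0<..<T}" for t
    using der[OF that] by (rule differentiableI_vector)
  then have w_int: "(w has_integral W / 2 - K) {0..T}"
    unfolding w_def W_def K_def using has_integral_marchaud_energy[OF assms(1,2) _ cont] assms(3) by simp
  have "a t + c * w t \<le> F t" if t: "t \<in> {0<..<T}" for t
  proof -
    have "w t \<le> m t"
      unfolding w_def m_def using t der int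
      by (intro caputo_inner_lower_bound[OF assms(1,2)] continuous_on_subset[OF cont]) auto
    then have "c * w t \<le> c * m t"
      using \<open>0 \<le> c\<close> by (rule mult_left_mono)
    then show ?thesis
      using eq[OF t] unfolding m_def by simp
  qed
  moreover have "(\<lambda>t. c * m t + a t) measurable_on {0..T}"
    unfolding m_def
    by (intro measurable_on_add measurable_on_cmul a_meas
        measurable_on_inner_caputo_integral[OF assms(1-3) cont der int])
  then have "F measurable_on {0..T}"
    by (rule measurable_on_spike[of _ _ "{0, T}"]) (simp_all add: eq m_def)
  then have F_int: "F integrable_on {0..T}"
    using F_bound by (intro measurable_dominated_off_negligible_imp_integrable[of F _ "\<lambda>_. M" "{}"]) auto
  ultimately have a_int: "a integrable_on {0..T}"
    and main: "integral {0..T} a \<le> integral {0..T} F - c * (W / 2 - K)"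
    using sandwiched_integrable_and_integral_le[OF a_meas F_int w_int \<open>0 \<le> c\<close> nonneg] by auto
  show ?thesis
  proof (intro exI conjI)
    show "((\<lambda>t. c * ((T - t) powr (-b) + t powr (-b)) * (norm (u t))\<^sup>2) has_integral c * W) {0..T}"
      unfolding W_def mult.assoc
      by (intro has_integral_mult_right integrable_integral integrable_endpoint_singular_weight
          continuous_intros cont) (use assms(2,3) in auto)
    show "((\<lambda>t. t powr (-b) * inner (u 0) (u t)) has_integral K) {0..T}"
      unfolding K_def
      by (intro integrable_integral integrable_powr_times_continuous[OF assms(2)] continuous_intros cont)
    show "(a has_integral integral {0..T} a) {0..T}" "(F has_integral integral {0..T} F) {0..T}"
      using a_int F_int by (simp_all add: integrable_integral)
    show "c * W / 2 + integral {0..T} a \<le> integral {0..T} F + c * K"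
      using main by (simp add: algebra_simps)
  qed
qed

lemma positive_definite_op_inner_nonneg:
  assumes "dense_linear_operator A DA" "positive_definite_op A DA" "v \<in> DA"
  shows "0 \<le> inner (A v) v"
proof (cases "v = 0")
  case True
  have "A (0 *\<^sub>R v) = 0 *\<^sub>R A v"
    using assms(1,3) unfolding dense_linear_operator_def by blast
  then show ?thesis
    using True by simp
next
  case False
  then show ?thesis
    using assms(2,3) unfolding positive_definite_op_def by (simp add: less_imp_le)
qed

lemma exp_weighted_bound_imp_bounded_on_Icc:
  fixes f :: "real \<Rightarrow> 'a::real_normed_vector"
  assumes "\<exists>\<sigma>>0. \<exists>C. \<forall>t\<ge>0. exp (- \<sigma> * t) * norm (f t) \<le> C"
  obtains M where "\<And>t. t \<in> {0..T} \<Longrightarrow> norm (f t) \<le> M"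
proof -
  obtain \<sigma> C where "\<sigma> > 0" and C: "\<And>t. t \<ge> 0 \<Longrightarrow> exp (- \<sigma> * t) * norm (f t) \<le> C"
    using assms by blast
  have "norm (f t) \<le> exp (\<sigma> * T) * C" if "t \<in> {0..T}" for t
  proof -
    have "norm (f 0) \<le> C"
      using C[of 0] by simp
    then have "0 \<le> C"
      using norm_ge_zero order_trans by blast
    have "norm (f t) = exp (\<sigma> * t) * (exp (- \<sigma> * t) * norm (f t))"
      by (simp add: exp_minus field_simps)
    also have "\<dots> \<le> exp (\<sigma> * T) * C"
      using C[of t] that \<open>\<sigma> > 0\<close> \<open>0 \<le> C\<close> by (intro mult_mono) auto
    finally show ?thesis .
  qed
  then show ?thesis
    using that by blast
qed

lemma exp_weighted_bound_imp_inner_bounded: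
  fixes f u :: "real \<Rightarrow> 'a::real_inner"
  assumes "\<exists>\<sigma>>0. \<exists>C. \<forall>t\<ge>0. exp (- \<sigma> * t) * norm (f t) \<le> C" "continuous_on {0..T} u"
  obtains M where "\<And>t. t \<in> {0..T} \<Longrightarrow> \<bar>inner (f t) (u t)\<bar> \<le> M"
proof -
  obtain Mf where Mf: "\<And>t. t \<in> {0..T} \<Longrightarrow> norm (f t) \<le> Mf"
    using exp_weighted_bound_imp_bounded_on_Icc[OF assms(1)] by blast
  obtain Mu where Mu: "\<And>t. t \<in> {0..T} \<Longrightarrow> norm (u t) \<le> Mu"
    using continuous_on_compact_bound[OF compact_Icc assms(2)] by blast
  have "\<bar>inner (f t) (u t)\<bar> \<le> \<bar>Mf\<bar> * Mu" if "t \<in> {0..T}" for t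
  proof -
    have "norm (f t) \<le> \<bar>Mf\<bar>"
      using Mf[OF that] abs_ge_self[of Mf] by linarith
    with Mu[OF that] have "norm (f t) * norm (u t) \<le> \<bar>Mf\<bar> * Mu"
      by (intro mult_mono) auto
    with Cauchy_Schwarz_ineq2[of "f t" "u t"] show ?thesis
      by linarith
  qed
  then show ?thesis
    using that by blast
qed

lemma is_solutionD:
  assumes "is_solution \<beta> A DA f u0 T u" "t \<in> {0<..<T}"
  shows "(u has_vector_derivative vector_derivative u (at t)) (at t)"
    and "(\<lambda>\<tau>. (t - \<tau>) powr (-\<beta>) *\<^sub>R vector_derivative u (at \<tau>)) integrable_on {0..t}"
    and "u t \<in> DA"
    and "f t = (1 / Gamma (1 - \<beta>)) *\<^sub>R integral {0..t} (\<lambda>\<tau>. (t - \<tau>) powr (-\<beta>) *\<^sub>R vector_derivative u (at \<tau>))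
               + A (u t)"
  using assms unfolding is_solution_def caputo_deriv_def
  by (auto simp: vector_derivative_works[symmetric])

theorem theorem4p2:
  fixes A :: "'a::{real_inner, complete_space} \<Rightarrow> 'a"
    and DA :: "'a set"
    and f u :: "real \<Rightarrow> 'a"
    and u0 :: 'a
    and \<beta> T :: real
  assumes "dense_linear_operator A DA"
    and "selfadjoint_op A DA"
    and "positive_definite_op A DA"
    and "0 < \<beta>" and "\<beta> < 1" and "0 < T"
    and "\<exists>\<sigma>>0. \<exists>C. \<forall>t\<ge>0. exp (- \<sigma> * t) * norm (f t) \<le> C"
    and "is_solution \<beta> A DA f u0 T u"
  shows "\<exists>I1 I2 I3 I4.
     ((\<lambda>t. g_weight \<beta> T t * (norm (u t))\<^sup>2) has_integral I1) {0..T} \<and>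
     ((\<lambda>t. inner (A (u t)) (u t)) has_integral I2) {0..T} \<and>
     ((\<lambda>t. inner (f t) (u t)) has_integral I3) {0..T} \<and>
     ((\<lambda>t. t powr (- \<beta>) * inner u0 (u t)) has_integral I4) {0..T} \<and>
     I1 / 2 + I2 \<le> I3 + I4 / Gamma (1 - \<beta>)"
proof -
  note sol = is_solutionD[OF assms(8)]
  have cont: "continuous_on {0..T} u" and "u 0 = u0"
    using assms(8) unfolding is_solution_def by blast+
  obtain M where bound: "\<And>t. t \<in> {0..T} \<Longrightarrow> \<bar>inner (f t) (u t)\<bar> \<le> M"
    using exp_weighted_bound_imp_inner_bounded[OF assms(7) cont] by blast
  have meas: "(\<lambda>t. inner (A (u t)) (u t)) measurable_on {0..T}"
    using assms(1,2) unfolding dense_linear_operator_def selfadjoint_op_def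
    by (intro measurable_on_inner_symmetric_operator[OF _ _ cont sol(3)]) blast+
  have eq: "inner (f t) (u t) = 1 / Gamma (1 - \<beta>) *
      inner (integral {0..t} (\<lambda>\<tau>. (t - \<tau>) powr (-\<beta>) *\<^sub>R vector_derivative u (at \<tau>))) (u t)
      + inner (A (u t)) (u t)" if "t \<in> {0<..<T}" for t
    using sol(4)[OF that] by (simp add: inner_add_left)
  have "0 \<le> 1 / Gamma (1 - \<beta>)"
    using assms(5) by (simp add: Gamma_real_pos less_imp_le)
  from caputo_energy_inequality[OF assms(4-6) this cont sol(1,2) eq
      positive_definite_op_inner_nonneg[OF assms(1,3) sol(3)] meas bound]
  show ?thesis
    unfolding g_weight_def \<open>u 0 = u0\<close>[symmetric] by (simp add: mult.assoc)
qed

end
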